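(* For $n\ge 1$ let $Hk_n=\sum_{r=0}^{n-1}p_{(n-r,1^r)}$ (a Schur-positive symmetric function), and let $W_n$ be the $S_n$-module with Frobenius characteristic $Hk_n$. Then: (1) for $n\ge1$, the restriction $W_{n+1}\downarrow_{S_n}$ is isomorphic to $W_n\oplus\big(W_n\downarrow_{S_{n-1}}\big)\uparrow^{S_n}$; (2) for each $n\ge1$, $Conj_n$ equals the homogeneous degree-$n$ component of $(1-Lie)\cdot\sum_{k\ge1}Hk_k[Lie]$.
   Context: $p_\mu$ denotes power sums, and $f[g]$ denotes plethysm of symmetric functions. $Conj_n$ is the Frobenius characteristic of the action of $S_n$ by conjugation on the conjugacy class of $n$-cycles. $Lie_n$ is the $S_n$-module obtained by inducing a faithful linear character (a primitive $n$th root of unity) of the cyclic subgroup generated by an $n$-cycle up to $S_n$, and $Lie=\sum_{n\ge1}\mathrm{ch}\,Lie_n$, where $\mathrm{ch}$ denotes Frobenius characteristic. *)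

theory Defs
  imports Complex_Main "HOL-Combinatorics.Permutations" "HOL-Library.Multiset"
begin

text \<open>A (possibly infinite, graded-completed) symmetric function over the complex
numbers is represented by its family of coefficients in the power-sum basis:
f represents the formal sum over partitions lam of (f lam) * p_lam.
Partitions are multisets of positive naturals; the value at multisets
containing 0 is irrelevant (all functions below vanish there).\<close>

type_synonym sf = "nat multiset \<Rightarrow> complex"

definition is_partition :: "nat multiset \<Rightarrow> bool" where
  "is_partition lam \<longleftrightarrow> 0 \<notin># lam"

definition pw :: "nat multiset \<Rightarrow> sf" where
  "pw lam = (\<lambda>mu. if mu = lam then 1 else 0)"

definition sf_one :: sf where "sf_one = pw {#}"

definition sf_add :: "sf \<Rightarrow> sf \<Rightarrow> sf" where
  "sf_add f g = (\<lambda>mu. f mu + g mu)"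

definition sf_sub :: "sf \<Rightarrow> sf \<Rightarrow> sf" where
  "sf_sub f g = (\<lambda>mu. f mu - g mu)"

text \<open>product, using p_lam * p_mu = p_(lam + mu)\<close>
definition sf_mult :: "sf \<Rightarrow> sf \<Rightarrow> sf" where
  "sf_mult f g = (\<lambda>nu. \<Sum>lam\<in>{lam. lam \<subseteq># nu}. f lam * g (nu - lam))"

definition sf_prod_list :: "sf list \<Rightarrow> sf" where
  "sf_prod_list fs = foldr sf_mult fs sf_one"

definition deg_part :: "nat \<Rightarrow> sf \<Rightarrow> sf" where
  "deg_part n f = (\<lambda>lam. if sum_mset lam = n then f lam else 0)"

text \<open>p_k[g] = sum over mu of g(mu) p_(k mu) (p_k[g] replaces every p_i by p_(k i))\<close>
definition pleth_p :: "nat \<Rightarrow> sf \<Rightarrow> sf" where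
  "pleth_p k g = (\<lambda>mu. if 0 < k \<and> (\<forall>x\<in>#mu. k dvd x)
                        then g (image_mset (\<lambda>x. x div k) mu) else 0)"

text \<open>Plethysm f[g] = sum over lam of f(lam) * prod_i p_(lam_i)[g], for g without
constant term (then only partitions lam with |lam| <= |nu| contribute to the
coefficient of p_nu, so the sum below is the full, finite, sum).\<close>
definition plethysm :: "sf \<Rightarrow> sf \<Rightarrow> sf" where
  "plethysm f g = (\<lambda>nu. \<Sum>lam\<in>{lam. is_partition lam \<and> sum_mset lam \<le> sum_mset nu}.
       f lam * sf_prod_list (map (\<lambda>i. pleth_p i g) (sorted_list_of_multiset lam)) nu)"

text \<open>S_n acts on {0,...,n-1}; S_(n-1) \<subseteq> S_n as permutations fixing n-1.\<close>
definition Sym :: "nat \<Rightarrow> (nat \<Rightarrow> nat) set" where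
  "Sym n = {\<sigma>. \<sigma> permutes {..<n}}"

definition orb :: "(nat \<Rightarrow> nat) \<Rightarrow> nat \<Rightarrow> nat set" where
  "orb \<sigma> x = range (\<lambda>k. (\<sigma> ^^ k) x)"

definition cycle_type :: "nat \<Rightarrow> (nat \<Rightarrow> nat) \<Rightarrow> nat multiset" where
  "cycle_type n \<sigma> = image_mset card (mset_set {orb \<sigma> x | x. x < n})"

definition class_fun :: "nat \<Rightarrow> ((nat \<Rightarrow> nat) \<Rightarrow> complex) \<Rightarrow> bool" where
  "class_fun n \<chi> \<longleftrightarrow> (\<forall>\<sigma>\<in>Sym n. \<forall>\<tau>\<in>Sym n. \<chi> (\<tau> \<circ> \<sigma> \<circ> inv \<tau>) = \<chi> \<sigma>)"

definition frob :: "nat \<Rightarrow> ((nat \<Rightarrow> nat) \<Rightarrow> complex) \<Rightarrow> sf" where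
  "frob n \<chi> = (\<lambda>lam. (\<Sum>\<sigma>\<in>Sym n. if cycle_type n \<sigma> = lam then \<chi> \<sigma> else 0) / fact n)"

definition ind_char :: "(nat \<Rightarrow> nat) set \<Rightarrow> (nat \<Rightarrow> nat) set
      \<Rightarrow> ((nat \<Rightarrow> nat) \<Rightarrow> complex) \<Rightarrow> (nat \<Rightarrow> nat) \<Rightarrow> complex" where
  "ind_char G H \<chi> g = (\<Sum>x\<in>G. if x \<circ> g \<circ> inv x \<in> H then \<chi> (x \<circ> g \<circ> inv x) else 0) / card H"

definition cyc :: "nat \<Rightarrow> nat \<Rightarrow> nat" where
  "cyc n = (\<lambda>i. if i < n then Suc i mod n else i)"

definition cyc_grp :: "nat \<Rightarrow> (nat \<Rightarrow> nat) set" where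
  "cyc_grp n = {cyc n ^^ j | j. j < n}"

definition lin_char :: "nat \<Rightarrow> (nat \<Rightarrow> nat) \<Rightarrow> complex" where
  "lin_char n h = exp (2 * pi * \<i> / of_nat n) ^ (THE j. j < n \<and> h = cyc n ^^ j)"

definition lie_char :: "nat \<Rightarrow> (nat \<Rightarrow> nat) \<Rightarrow> complex" where
  "lie_char n = ind_char (Sym n) (cyc_grp n) (lin_char n)"

definition Lie :: sf where
  "Lie = (\<lambda>lam. \<Sum>n. frob (Suc n) (lie_char (Suc n)) lam)"

text \<open>character of the conjugation action of S_n on its n-cycles
(permutation character: number of fixed n-cycles)\<close>
definition conj_char :: "nat \<Rightarrow> (nat \<Rightarrow> nat) \<Rightarrow> complex" where
  "conj_char n \<sigma> = of_nat (card {\<tau>\<in>Sym n. cycle_type n \<tau> = {#n#} \<and> \<sigma> \<circ> \<tau> \<circ> inv \<sigma> = \<tau>})"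

definition Hk :: "nat \<Rightarrow> sf" where
  "Hk n = (\<lambda>lam. \<Sum>r<n. pw (add_mset (n - r) (replicate_mset r 1)) lam)"

end

theory Submission
  imports Defs "HOL-Combinatorics.Orbits" "HOL-Number_Theory.Totient"
begin

text \<open>
  (1) A class function of \<open>S\<^sub>n\<close> is determined by its Frobenius characteristic:
  \<open>\<chi>(\<sigma>) = n! ch(\<chi>)(\<lambda>) / |C(\<lambda>)|\<close>, where \<open>C(\<lambda>)\<close> is the class of cycle type \<open>\<lambda>\<close>. Viewing
  \<open>\<sigma> \<in> S\<^sub>n\<close> with \<open>f\<close> fixed points in \<open>S\<^sub>n\<^sub>+\<^sub>1\<close> adds a part 1 to its type; that part drops
  out of \<open>Hk\<^sub>n\<^sub>+\<^sub>1\<close>, and double counting gives \<open>(f + 1) |C(\<lambda> \<union> {1})| = (n + 1) |C(\<lambda>)|\<close>.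
  Hence \<open>W\<^sub>n\<^sub>+\<^sub>1(\<sigma>) = (1 + f) W\<^sub>n(\<sigma>)\<close>, while inducing a class function from \<open>S\<^sub>n\<^sub>-\<^sub>1\<close> to \<open>S\<^sub>n\<close>
  multiplies it by the number of fixed points.

  (2) Expanding the plethysm, \<open>Hk\<^sub>k[Lie] = \<Sum>(r < k) p\<^sub>k\<^sub>-\<^sub>r[Lie] Lie\<^sup>r\<close>, so multiplying
  \<open>\<Sum>\<^sub>k Hk\<^sub>k[Lie]\<close> by \<open>1 - Lie\<close> telescopes to \<open>\<Sum>\<^sub>m p\<^sub>m[Lie]\<close>. The centraliser of the long cycle
  \<open>c\<close> is the cyclic group it generates, so \<open>Conj\<^sub>n\<close> is induced from its trivial character
  and \<open>Lie\<^sub>n\<close> from a faithful one; \<open>c\<^sup>j\<close> has \<open>gcd(j, n)\<close> cycles of length \<open>n / gcd(j, n)\<close>.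
  Comparing coefficients of power sums, the degree-\<open>n\<close> part of \<open>\<Sum>\<^sub>m p\<^sub>m[Lie]\<close> equals
  \<open>ch Conj\<^sub>n\<close> by the identity \<open>\<Sum>(m | e) m c\<^sub>e\<^sub>/\<^sub>m = \<phi>(e)\<close> for the Ramanujan sums \<open>c\<^sub>t\<close>.
\<close>

lemma card_filter_eq_sum: "finite A \<Longrightarrow> card {x\<in>A. P x} = (\<Sum>x\<in>A. if P x then 1 else 0)"
  by (simp add: sum.If_cases Int_def conj_commute)

lemma sum_card_filter_swap:
  assumes "finite A" "finite B"
  shows "(\<Sum>a\<in>A. card {b\<in>B. P a b}) = (\<Sum>b\<in>B. card {a\<in>A. P a b})"
  using sum.swap[of "\<lambda>a b. if P a b then 1 else 0" B A]
  by (simp add: card_filter_eq_sum assms)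

lemma card_filter_eq_sum_card_fibres:
  assumes "finite S" "finite I" "\<And>x. x \<in> S \<Longrightarrow> g x \<in> I"
  shows "card {x\<in>S. P (g x)} = (\<Sum>i\<in>{i\<in>I. P i}. card {x\<in>S. g x = i})"
proof -
  have "{x\<in>S. P (g x)} = (\<Union>i\<in>{i\<in>I. P i}. {x\<in>S. g x = i})"
    using assms(3) by auto
  moreover have "card (\<Union>i\<in>{i\<in>I. P i}. {x\<in>S. g x = i}) = (\<Sum>i\<in>{i\<in>I. P i}. card {x\<in>S. g x = i})"
    by (rule card_UN_disjoint) (use assms in auto)
  ultimately show ?thesis
    by simp
qed

lemma mem_Sym_iff: "\<sigma> \<in> Sym n \<longleftrightarrow> \<sigma> permutes {..<n}"
  by (simp add: Sym_def)

lemma Sym_permutation: "\<sigma> \<in> Sym n \<Longrightarrow> permutation \<sigma>"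
  unfolding mem_Sym_iff permutation_permutes by blast

lemma Sym_bij: "\<sigma> \<in> Sym n \<Longrightarrow> bij \<sigma>"
  unfolding mem_Sym_iff by (rule permutes_bij)

lemma Sym_id: "id \<in> Sym n"
  unfolding mem_Sym_iff by simp

lemma Sym_comp: "\<sigma> \<in> Sym n \<Longrightarrow> \<tau> \<in> Sym n \<Longrightarrow> \<sigma> \<circ> \<tau> \<in> Sym n"
  unfolding mem_Sym_iff by (rule permutes_compose)

lemma Sym_inv: "\<sigma> \<in> Sym n \<Longrightarrow> inv \<sigma> \<in> Sym n"
  unfolding mem_Sym_iff by (rule permutes_inv)

lemma Sym_conj: "\<sigma> \<in> Sym n \<Longrightarrow> \<tau> \<in> Sym n \<Longrightarrow> \<tau> \<circ> \<sigma> \<circ> inv \<tau> \<in> Sym n"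
  by (intro Sym_comp Sym_inv)

lemma Sym_fixes_ge: "\<sigma> \<in> Sym n \<Longrightarrow> n \<le> x \<Longrightarrow> \<sigma> x = x"
  unfolding mem_Sym_iff by (rule permutes_not_in) auto

lemma Sym_less: "\<sigma> \<in> Sym n \<Longrightarrow> x < n \<Longrightarrow> \<sigma> x < n"
  unfolding mem_Sym_iff using permutes_in_image by fastforce

lemma Sym_mono: "\<sigma> \<in> Sym n \<Longrightarrow> n \<le> m \<Longrightarrow> \<sigma> \<in> Sym m"
  unfolding mem_Sym_iff by (erule permutes_subset) auto

lemma Sym_if_inj_on:
  assumes "inj_on \<phi> {..<n}" "\<phi> ` {..<n} \<subseteq> {..<n}" "\<And>y. n \<le> y \<Longrightarrow> \<phi> y = y"
  shows "\<phi> \<in> Sym n"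
proof -
  have "\<phi> ` {..<n} = {..<n}"
    by (rule endo_inj_surj) (use assms in auto)
  then show ?thesis
    unfolding mem_Sym_iff using assms by (intro bij_imp_permutes) (auto simp: bij_betw_def)
qed

lemma Sym_Suc_iff:
  assumes "\<tau> \<in> Sym (Suc n)"
  shows "\<tau> \<in> Sym n \<longleftrightarrow> \<tau> n = n"
proof
  assume "\<tau> n = n"
  with assms show "\<tau> \<in> Sym n"
    unfolding mem_Sym_iff permutes_def by (metis lessThan_iff less_Suc_eq)
qed (simp add: Sym_fixes_ge)

lemma card_Sym: "card (Sym n) = fact n"
  unfolding Sym_def by (rule card_permutations) auto

lemma finite_Sym: "finite (Sym n)"
  using card_Sym by (metis card_eq_0_iff fact_nonzero)

lemma Sym_inv_apply:
  "\<sigma> \<in> Sym n \<Longrightarrow> \<sigma> (inv \<sigma> x) = x" "\<sigma> \<in> Sym n \<Longrightarrow> inv \<sigma> (\<sigma> x) = x"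
  unfolding mem_Sym_iff by (auto simp: permutes_inverses)

lemma Sym_comp_inv_cancel:
  assumes "\<sigma> \<in> Sym n"
  shows "\<sigma> \<circ> inv \<sigma> = id" "inv \<sigma> \<circ> \<sigma> = id" "f \<circ> \<sigma> \<circ> inv \<sigma> = f" "f \<circ> inv \<sigma> \<circ> \<sigma> = f"
  using assms unfolding mem_Sym_iff by (auto simp: permutes_inv_o o_assoc[symmetric])

lemma Sym_inv_inv: "\<sigma> \<in> Sym n \<Longrightarrow> inv (inv \<sigma>) = \<sigma>"
  unfolding mem_Sym_iff by (rule permutes_inv_inv)

lemma transpose_Sym: "i < n \<Longrightarrow> j < n \<Longrightarrow> transpose i j \<in> Sym n"
  unfolding mem_Sym_iff by (rule permutes_swap_id) auto

lemma bij_betw_Sym_conj: "\<tau> \<in> Sym n \<Longrightarrow> bij_betw (\<lambda>\<sigma>. \<tau> \<circ> \<sigma> \<circ> inv \<tau>) (Sym n) (Sym n)"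
proof (rule bij_betw_byWitness[where f'="\<lambda>\<sigma>. inv \<tau> \<circ> \<sigma> \<circ> \<tau>"])
  assume \<tau>: "\<tau> \<in> Sym n"
  show "\<forall>\<sigma>\<in>Sym n. inv \<tau> \<circ> (\<tau> \<circ> \<sigma> \<circ> inv \<tau>) \<circ> \<tau> = \<sigma>"
    "\<forall>\<sigma>\<in>Sym n. \<tau> \<circ> (inv \<tau> \<circ> \<sigma> \<circ> \<tau>) \<circ> inv \<tau> = \<sigma>"
    by (auto simp: fun_eq_iff Sym_inv_apply[OF \<tau>])
  show "(\<lambda>\<sigma>. \<tau> \<circ> \<sigma> \<circ> inv \<tau>) ` Sym n \<subseteq> Sym n"
    using \<tau> Sym_conj by auto
  show "(\<lambda>\<sigma>. inv \<tau> \<circ> \<sigma> \<circ> \<tau>) ` Sym n \<subseteq> Sym n"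
    using Sym_conj[OF _ Sym_inv[OF \<tau>]] Sym_inv_inv[OF \<tau>] by auto
qed

definition orbs :: "nat \<Rightarrow> (nat \<Rightarrow> nat) \<Rightarrow> nat set set" where
  "orbs n \<sigma> = {orb \<sigma> x | x. x < n}"

lemma cycle_type_eq_orbs: "cycle_type n \<sigma> = image_mset card (mset_set (orbs n \<sigma>))"
  by (simp add: cycle_type_def orbs_def)

lemma finite_orbs: "finite (orbs n \<sigma>)"
proof -
  have "orbs n \<sigma> = orb \<sigma> ` {..<n}"
    by (auto simp: orbs_def)
  then show ?thesis
    by simp
qed

lemma orb_eq_orbit: "permutation \<sigma> \<Longrightarrow> orb \<sigma> x = orbit \<sigma> x"
  by (auto simp: orb_def orbit_altdef_permutation)

lemma mem_orb_iff: "y \<in> orb \<sigma> x \<longleftrightarrow> (\<exists>k. (\<sigma> ^^ k) x = y)"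
  unfolding orb_def by auto

lemma funpow_in_orb: "(\<sigma> ^^ k) x \<in> orb \<sigma> x"
  unfolding mem_orb_iff by blast

lemma self_in_orb: "x \<in> orb \<sigma> x"
  using funpow_in_orb[of 0] by simp

lemma orb_eq_if_mem: "permutation \<sigma> \<Longrightarrow> y \<in> orb \<sigma> x \<Longrightarrow> orb \<sigma> y = orb \<sigma> x"
  unfolding orb_eq_orbit by (metis cyclic_on_orbit' orbit_cyclic_eq3)

lemma orb_apply: "permutation \<sigma> \<Longrightarrow> orb \<sigma> (\<sigma> x) = orb \<sigma> x"
  using orb_eq_if_mem funpow_in_orb[of 1 \<sigma>] by simp

lemma orb_eq_singleton_iff: "permutation \<sigma> \<Longrightarrow> orb \<sigma> x = {x} \<longleftrightarrow> \<sigma> x = x"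
  by (simp add: orb_eq_orbit orbit_eq_singleton_iff)

lemma orb_subset_Sym: "\<sigma> \<in> Sym n \<Longrightarrow> x < n \<Longrightarrow> orb \<sigma> x \<subseteq> {..<n}"
proof -
  assume "\<sigma> \<in> Sym n" "x < n"
  then have "(\<sigma> ^^ k) x < n" for k
    by (induct k) (auto simp: Sym_less)
  then show ?thesis
    unfolding orb_def by auto
qed

lemma orbs_subset_Sym: "\<sigma> \<in> Sym n \<Longrightarrow> A \<in> orbs n \<sigma> \<Longrightarrow> A \<subseteq> {..<n}"
  using orb_subset_Sym by (auto simp: orbs_def)

lemma funpow_eq_iff_mod_card_orb:
  assumes "permutation \<sigma>"
  shows "(\<sigma> ^^ k) x = (\<sigma> ^^ l) x \<longleftrightarrow> k mod card (orb \<sigma> x) = l mod card (orb \<sigma> x)"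
proof -
  define d where "d = funpow_dist1 \<sigma> x x"
  have x: "x \<in> orbit \<sigma> x"
    using assms by (rule permutation_self_in_orbit)
  have inj: "inj_on (\<lambda>k. (\<sigma> ^^ k) x) {0..<d}"
    unfolding d_def by (rule inj_on_funpow_dist1[OF x])
  have "card (orb \<sigma> x) = d"
    using assms inj orbit_conv_funpow_dist1[OF x]
    by (simp add: orb_eq_orbit card_image d_def)
  moreover have "(\<sigma> ^^ k) x = (\<sigma> ^^ l) x \<longleftrightarrow> (\<sigma> ^^ (k mod d)) x = (\<sigma> ^^ (l mod d)) x"
    using funpow_mod_eq[of d \<sigma> x] funpow_dist1_prop[OF x] by (simp add: d_def)
  moreover have "\<dots> \<longleftrightarrow> k mod d = l mod d"
    using inj by (auto simp: inj_on_def d_def)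
  ultimately show ?thesis
    by simp
qed

lemma orb_conj:
  assumes "\<tau> \<in> Sym n"
  shows "orb (\<tau> \<circ> \<sigma> \<circ> inv \<tau>) (\<tau> y) = \<tau> ` orb \<sigma> y"
proof -
  have "((\<tau> \<circ> \<sigma> \<circ> inv \<tau>) ^^ k) (\<tau> y) = \<tau> ((\<sigma> ^^ k) y)" for k
    by (induct k) (auto simp: Sym_inv_apply[OF assms])
  then show ?thesis
    unfolding orb_def by (auto simp: image_iff)
qed

lemma orbs_conj:
  assumes "\<tau> \<in> Sym n"
  shows "orbs n (\<tau> \<circ> \<sigma> \<circ> inv \<tau>) = (`) \<tau> ` orbs n \<sigma>"
proof (intro set_eqI iffI)
  fix B assume "B \<in> orbs n (\<tau> \<circ> \<sigma> \<circ> inv \<tau>)"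
  then obtain x where x: "x < n" "B = orb (\<tau> \<circ> \<sigma> \<circ> inv \<tau>) (\<tau> (inv \<tau> x))"
    using Sym_inv_apply[OF assms] by (auto simp: orbs_def)
  then show "B \<in> (`) \<tau> ` orbs n \<sigma>"
    using orb_conj[OF assms] Sym_less[OF Sym_inv[OF assms] x(1)] by (auto simp: orbs_def)
next
  fix B assume "B \<in> (`) \<tau> ` orbs n \<sigma>"
  then obtain y where "y < n" "B = orb (\<tau> \<circ> \<sigma> \<circ> inv \<tau>) (\<tau> y)"
    using orb_conj[OF assms] by (auto simp: orbs_def)
  then show "B \<in> orbs n (\<tau> \<circ> \<sigma> \<circ> inv \<tau>)"
    using Sym_less[OF assms] by (auto simp: orbs_def)
qed

lemma cycle_type_conj:
  assumes "\<tau> \<in> Sym n"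
  shows "cycle_type n (\<tau> \<circ> \<sigma> \<circ> inv \<tau>) = cycle_type n \<sigma>"
proof -
  have inj: "inj \<tau>"
    using Sym_bij[OF assms] bij_is_inj by blast
  then have "inj_on ((`) \<tau>) (orbs n \<sigma>)"
    by (auto simp: inj_on_def inj_image_eq_iff)
  then show ?thesis
    unfolding cycle_type_eq_orbs orbs_conj[OF assms]
    by (simp add: image_mset_mset_set[symmetric] multiset.map_comp o_def card_image
        inj_on_subset[OF inj] finite_orbs)
qed

lemma count_image_mset_set:
  "finite A \<Longrightarrow> count (image_mset f (mset_set A)) v = card {a\<in>A. f a = v}"
  by (simp add: count_image_mset Int_def vimage_def conj_commute)

lemma count_cycle_type_1:
  assumes "\<sigma> \<in> Sym n"
  shows "count (cycle_type n \<sigma>) 1 = card {i. i < n \<and> \<sigma> i = i}"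
proof -
  have p: "permutation \<sigma>"
    using Sym_permutation[OF assms] .
  have "{A \<in> orbs n \<sigma>. card A = 1} = (\<lambda>i. {i}) ` {i. i < n \<and> \<sigma> i = i}"
  proof (intro set_eqI iffI)
    fix A assume "A \<in> {A \<in> orbs n \<sigma>. card A = 1}"
    then obtain x where x: "x < n" "A = orb \<sigma> x" "card A = 1"
      by (auto simp: orbs_def)
    then have "A = {x}"
      using self_in_orb[of x \<sigma>] by (metis card_1_singletonE singletonD)
    then have "\<sigma> x = x"
      using x orb_eq_singleton_iff[OF p] by simp
    then show "A \<in> (\<lambda>i. {i}) ` {i. i < n \<and> \<sigma> i = i}"
      using \<open>A = {x}\<close> x by auto
  next
    fix A assume "A \<in> (\<lambda>i. {i}) ` {i. i < n \<and> \<sigma> i = i}"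
    then obtain i where "i < n" "\<sigma> i = i" "A = {i}"
      by auto
    then show "A \<in> {A \<in> orbs n \<sigma>. card A = 1}"
      using orb_eq_singleton_iff[OF p] by (auto simp: orbs_def)
  qed
  then show ?thesis
    unfolding cycle_type_eq_orbs count_image_mset_set[OF finite_orbs]
    by (simp add: card_image)
qed

lemma cycle_type_Suc:
  assumes "\<sigma> \<in> Sym n"
  shows "cycle_type (Suc n) \<sigma> = add_mset 1 (cycle_type n \<sigma>)"
proof -
  have "orb \<sigma> n = {n}"
    using orb_eq_singleton_iff[OF Sym_permutation[OF assms]] Sym_fixes_ge[OF assms] by simp
  then have "orbs (Suc n) \<sigma> = insert {n} (orbs n \<sigma>)"
    unfolding orbs_def by (auto simp: less_Suc_eq)
  moreover have "{n} \<notin> orbs n \<sigma>"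
    using orb_subset_Sym[OF assms] by (auto simp: orbs_def)
  ultimately show ?thesis
    unfolding cycle_type_eq_orbs using finite_orbs by simp
qed

section \<open>Permutations of equal cycle type are conjugate\<close>

lemma image_mset_mset_set_eq_imp_bij_betw:
  assumes "finite A" "finite B" "image_mset f (mset_set A) = image_mset g (mset_set B)"
  shows "\<exists>\<beta>. bij_betw \<beta> A B \<and> (\<forall>a\<in>A. g (\<beta> a) = f a)"
  using assms
proof (induction A arbitrary: B rule: finite_induct)
  case empty
  then show ?case
    by (auto simp: bij_betw_def mset_set_empty_iff)
next
  case (insert a A)
  then have "f a \<in># image_mset g (mset_set B)"
    by (metis image_mset_add_mset mset_set.insert union_single_eq_member)
  then obtain b where b: "b \<in> B" "g b = f a"
    using insert.prems(1) by auto
  then have "mset_set B = add_mset b (mset_set (B - {b}))"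
    using insert.prems(1) by (simp add: mset_set.remove)
  then have "image_mset f (mset_set A) = image_mset g (mset_set (B - {b}))"
    using insert b by simp
  then obtain \<beta> where \<beta>: "bij_betw \<beta> A (B - {b})" "\<forall>a\<in>A. g (\<beta> a) = f a"
    using insert.IH insert.prems(1) by blast
  have "bij_betw (\<beta>(a := b)) A (B - {b})"
    using \<beta>(1) insert.hyps(2) by (metis bij_betw_cong fun_upd_other)
  then have "bij_betw (\<beta>(a := b)) (A \<union> {a}) ((B - {b}) \<union> {b})"
    by (rule bij_betw_combine) auto
  moreover have "A \<union> {a} = insert a A" "(B - {b}) \<union> {b} = B"
    using b by auto
  ultimately have "bij_betw (\<beta>(a := b)) (insert a A) B"
    by simp
  moreover have "\<forall>x\<in>insert a A. g ((\<beta>(a := b)) x) = f x"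
    using \<beta>(2) b insert.hyps(2) by auto
  ultimately show ?case
    by blast
qed

definition orb_rep :: "nat set \<Rightarrow> nat" where
  "orb_rep A = (SOME a. a \<in> A)"

definition orb_exp :: "(nat \<Rightarrow> nat) \<Rightarrow> nat \<Rightarrow> nat" where
  "orb_exp \<sigma> y = (SOME k. (\<sigma> ^^ k) (orb_rep (orb \<sigma> y)) = y)"

lemma orb_rep:
  assumes \<sigma>: "\<sigma> \<in> Sym n" and A: "A \<in> orbs n \<sigma>"
  shows "orb \<sigma> (orb_rep A) = A" "orb_rep A < n"
proof -
  obtain x where x: "x < n" "A = orb \<sigma> x"
    using A by (auto simp: orbs_def)
  then have "orb_rep A \<in> A"
    unfolding orb_rep_def using self_in_orb by (metis someI)
  then show "orb \<sigma> (orb_rep A) = A" "orb_rep A < n"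
    using orb_eq_if_mem[OF Sym_permutation[OF \<sigma>]] orb_subset_Sym[OF \<sigma> x(1)] x by auto
qed

lemma funpow_orb_exp:
  assumes "\<sigma> \<in> Sym n" "y < n"
  shows "(\<sigma> ^^ orb_exp \<sigma> y) (orb_rep (orb \<sigma> y)) = y"
proof -
  have "orb \<sigma> y \<in> orbs n \<sigma>"
    using assms(2) by (auto simp: orbs_def)
  then have "orb \<sigma> (orb_rep (orb \<sigma> y)) = orb \<sigma> y"
    by (rule orb_rep(1)[OF assms(1)])
  then have "y \<in> orb \<sigma> (orb_rep (orb \<sigma> y))"
    using self_in_orb[of y \<sigma>] by simp
  then have "\<exists>k. (\<sigma> ^^ k) (orb_rep (orb \<sigma> y)) = y"
    by (simp only: mem_orb_iff)
  then show ?thesis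
    unfolding orb_exp_def by (rule someI_ex)
qed

text \<open>Given a length-preserving matching \<open>\<beta>\<close> of the orbits of \<open>\<sigma>\<close> with those of \<open>\<tau>\<close>, the
  conjugating permutation sends \<open>\<sigma>\<^sup>k r\<close>, for \<open>r\<close> the representative of a \<open>\<sigma>\<close>-orbit \<open>A\<close>,
  to \<open>\<tau>\<^sup>k r'\<close>, for \<open>r'\<close> the representative of \<open>\<beta> A\<close>; it is well defined because \<open>A\<close>
  and \<open>\<beta> A\<close> have the same length.\<close>

locale orbit_matching =
  fixes n :: nat and \<sigma> \<tau> :: "nat \<Rightarrow> nat" and \<beta> :: "nat set \<Rightarrow> nat set"
  assumes \<sigma>: "\<sigma> \<in> Sym n" and \<tau>: "\<tau> \<in> Sym n"
    and bij_\<beta>: "bij_betw \<beta> (orbs n \<sigma>) (orbs n \<tau>)"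
    and card_\<beta>: "\<And>A. A \<in> orbs n \<sigma> \<Longrightarrow> card (\<beta> A) = card A"
begin

definition conjugator :: "nat \<Rightarrow> nat" where
  "conjugator y = (if y < n then (\<tau> ^^ orb_exp \<sigma> y) (orb_rep (\<beta> (orb \<sigma> y))) else y)"

lemma orb_in_orbs: "y < n \<Longrightarrow> orb \<sigma> y \<in> orbs n \<sigma>"
  by (auto simp: orbs_def)

lemma matched_orb_in_orbs: "y < n \<Longrightarrow> \<beta> (orb \<sigma> y) \<in> orbs n \<tau>"
  by (rule bij_betw_apply[OF bij_\<beta> orb_in_orbs])

lemma card_orb_reps:
  assumes "y < n"
  shows "card (orb \<sigma> (orb_rep (orb \<sigma> y))) = card (orb \<sigma> y)"
    and "card (orb \<tau> (orb_rep (\<beta> (orb \<sigma> y)))) = card (orb \<sigma> y)"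
  using orb_rep(1)[OF \<sigma> orb_in_orbs[OF assms]] orb_rep(1)[OF \<tau> matched_orb_in_orbs[OF assms]]
    card_\<beta>[OF orb_in_orbs[OF assms]] by simp_all

lemma conjugator_eq_funpow:
  assumes y: "y < n" and j: "(\<sigma> ^^ j) (orb_rep (orb \<sigma> y)) = y"
  shows "conjugator y = (\<tau> ^^ j) (orb_rep (\<beta> (orb \<sigma> y)))"
proof -
  have "(\<sigma> ^^ j) (orb_rep (orb \<sigma> y)) = (\<sigma> ^^ orb_exp \<sigma> y) (orb_rep (orb \<sigma> y))"
    using j funpow_orb_exp[OF \<sigma> y] by simp
  then have "j mod card (orb \<sigma> y) = orb_exp \<sigma> y mod card (orb \<sigma> y)"
    using funpow_eq_iff_mod_card_orb[OF Sym_permutation[OF \<sigma>]] card_orb_reps(1)[OF y] by metis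
  then have "(\<tau> ^^ j) (orb_rep (\<beta> (orb \<sigma> y))) = (\<tau> ^^ orb_exp \<sigma> y) (orb_rep (\<beta> (orb \<sigma> y)))"
    using funpow_eq_iff_mod_card_orb[OF Sym_permutation[OF \<tau>]] card_orb_reps(2)[OF y] by metis
  then show ?thesis
    using y by (simp add: conjugator_def)
qed

lemma conjugator_apply: "conjugator (\<sigma> y) = \<tau> (conjugator y)"
proof (cases "y < n")
  case True
  have "orb \<sigma> (\<sigma> y) = orb \<sigma> y"
    using orb_apply[OF Sym_permutation[OF \<sigma>]] .
  then have "conjugator (\<sigma> y) = (\<tau> ^^ Suc (orb_exp \<sigma> y)) (orb_rep (\<beta> (orb \<sigma> y)))"
    using conjugator_eq_funpow[of "\<sigma> y" "Suc (orb_exp \<sigma> y)"] funpow_orb_exp[OF \<sigma> True]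
      Sym_less[OF \<sigma> True] by simp
  then show ?thesis
    using True by (simp add: conjugator_def)
qed (simp add: conjugator_def Sym_fixes_ge[OF \<sigma>] Sym_fixes_ge[OF \<tau>])

lemma orb_conjugator: "y < n \<Longrightarrow> orb \<tau> (conjugator y) = \<beta> (orb \<sigma> y)"
  using orb_eq_if_mem[OF Sym_permutation[OF \<tau>] funpow_in_orb]
    orb_rep(1)[OF \<tau> matched_orb_in_orbs] by (simp add: conjugator_def)

lemma inj_on_conjugator: "inj_on conjugator {..<n}"
proof (rule inj_onI)
  fix y y' assume "y \<in> {..<n}" "y' \<in> {..<n}" and eq: "conjugator y = conjugator y'"
  then have y: "y < n" "y' < n"
    by auto
  have "\<beta> (orb \<sigma> y) = \<beta> (orb \<sigma> y')"
    using orb_conjugator[OF y(1)] orb_conjugator[OF y(2)] eq by simp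
  then have same: "orb \<sigma> y = orb \<sigma> y'"
    using inj_onD[OF bij_betw_imp_inj_on[OF bij_\<beta>] _ orb_in_orbs[OF y(1)] orb_in_orbs[OF y(2)]] by simp
  then have "(\<tau> ^^ orb_exp \<sigma> y) (orb_rep (\<beta> (orb \<sigma> y))) = (\<tau> ^^ orb_exp \<sigma> y') (orb_rep (\<beta> (orb \<sigma> y)))"
    using eq y by (simp add: conjugator_def)
  then have "orb_exp \<sigma> y mod card (orb \<sigma> y) = orb_exp \<sigma> y' mod card (orb \<sigma> y)"
    unfolding funpow_eq_iff_mod_card_orb[OF Sym_permutation[OF \<tau>]] card_orb_reps(2)[OF y(1)] .
  then have "(\<sigma> ^^ orb_exp \<sigma> y) (orb_rep (orb \<sigma> y)) = (\<sigma> ^^ orb_exp \<sigma> y') (orb_rep (orb \<sigma> y))"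
    unfolding funpow_eq_iff_mod_card_orb[OF Sym_permutation[OF \<sigma>]] card_orb_reps(1)[OF y(1)] .
  also have "\<dots> = (\<sigma> ^^ orb_exp \<sigma> y') (orb_rep (orb \<sigma> y'))"
    by (simp only: same)
  finally show "y = y'"
    by (simp only: funpow_orb_exp[OF \<sigma> y(1)] funpow_orb_exp[OF \<sigma> y(2)])
qed

lemma conjugator_Sym: "conjugator \<in> Sym n"
proof (rule Sym_if_inj_on[OF inj_on_conjugator])
  have "conjugator y < n" if "y < n" for y
  proof -
    have "conjugator y \<in> \<beta> (orb \<sigma> y)"
      using self_in_orb[of "conjugator y" \<tau>] orb_conjugator[OF that] by simp
    then show ?thesis
      using orbs_subset_Sym[OF \<tau> matched_orb_in_orbs[OF that]] by auto
  qed
  then show "conjugator ` {..<n} \<subseteq> {..<n}"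
    by auto
qed (simp add: conjugator_def)

end

theorem conj_if_cycle_type_eq:
  assumes "\<sigma> \<in> Sym n" "\<tau> \<in> Sym n" "cycle_type n \<sigma> = cycle_type n \<tau>"
  shows "\<exists>\<phi>\<in>Sym n. \<tau> = \<phi> \<circ> \<sigma> \<circ> inv \<phi>"
proof -
  obtain \<beta> where "bij_betw \<beta> (orbs n \<sigma>) (orbs n \<tau>)" "\<forall>A\<in>orbs n \<sigma>. card (\<beta> A) = card A"
    using image_mset_mset_set_eq_imp_bij_betw[OF finite_orbs finite_orbs assms(3)[unfolded cycle_type_eq_orbs]]
    by blast
  then interpret orbit_matching n \<sigma> \<tau> \<beta>
    using assms(1,2) by unfold_locales auto
  have "conjugator \<circ> \<sigma> \<circ> inv conjugator = \<tau> \<circ> conjugator \<circ> inv conjugator"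
    by (simp add: fun_eq_iff conjugator_apply)
  then have "conjugator \<circ> \<sigma> \<circ> inv conjugator = \<tau>"
    by (simp add: Sym_comp_inv_cancel(3)[OF conjugator_Sym])
  then show ?thesis
    using conjugator_Sym by (intro bexI[of _ conjugator]) simp_all
qed

section \<open>Class functions and the Frobenius characteristic\<close>

definition class_size :: "nat \<Rightarrow> nat multiset \<Rightarrow> nat" where
  "class_size n lam = card {\<tau>\<in>Sym n. cycle_type n \<tau> = lam}"

lemma class_size_pos: "\<sigma> \<in> Sym n \<Longrightarrow> 0 < class_size n (cycle_type n \<sigma>)"
  unfolding class_size_def using finite_Sym by (subst card_gt_0_iff) auto

lemma class_fun_eq_if_cycle_type_eq:
  assumes "class_fun n \<chi>" "\<sigma> \<in> Sym n" "\<tau> \<in> Sym n" "cycle_type n \<tau> = cycle_type n \<sigma>"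
  shows "\<chi> \<tau> = \<chi> \<sigma>"
proof -
  obtain \<phi> where "\<phi> \<in> Sym n" "\<tau> = \<phi> \<circ> \<sigma> \<circ> inv \<phi>"
    using conj_if_cycle_type_eq[OF assms(2,3) assms(4)[symmetric]] by blast
  then show ?thesis
    using assms(1,2) unfolding class_fun_def by blast
qed

lemma frob_cong: "(\<And>\<sigma>. \<sigma> \<in> Sym n \<Longrightarrow> \<chi> \<sigma> = \<psi> \<sigma>) \<Longrightarrow> frob n \<chi> = frob n \<psi>"
  unfolding frob_def by (intro ext arg_cong2[where f="(/)"] sum.cong refl) auto

lemma frob_class_fun:
  assumes "class_fun n \<chi>" "\<sigma> \<in> Sym n"
  shows "frob n \<chi> (cycle_type n \<sigma>) = \<chi> \<sigma> * class_size n (cycle_type n \<sigma>) / fact n"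
proof -
  have "(\<Sum>\<tau>\<in>Sym n. if cycle_type n \<tau> = cycle_type n \<sigma> then \<chi> \<tau> else 0)
      = (\<Sum>\<tau>\<in>{\<tau>\<in>Sym n. cycle_type n \<tau> = cycle_type n \<sigma>}. \<chi> \<tau>)"
    using finite_Sym by (simp add: sum.inter_filter)
  also have "\<dots> = (\<Sum>\<tau>\<in>{\<tau>\<in>Sym n. cycle_type n \<tau> = cycle_type n \<sigma>}. \<chi> \<sigma>)"
    using class_fun_eq_if_cycle_type_eq[OF assms] by (intro sum.cong) auto
  finally show ?thesis
    by (simp add: frob_def class_size_def)
qed

lemma class_fun_eq_frob:
  assumes "class_fun n \<chi>" "\<sigma> \<in> Sym n"
  shows "\<chi> \<sigma> = frob n \<chi> (cycle_type n \<sigma>) * fact n / class_size n (cycle_type n \<sigma>)"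
  using frob_class_fun[OF assms] class_size_pos[OF assms(2)] by (simp add: field_simps)

section \<open>The restriction from \<open>S\<^sub>n\<^sub>+\<^sub>1\<close> to \<open>S\<^sub>n\<close>\<close>

lemma Hk_Suc_add_mset_1:
  assumes "1 \<le> n"
  shows "Hk (Suc n) (add_mset 1 lam) = Hk n lam"
proof -
  have "Hk (Suc n) (add_mset 1 lam)
      = pw {#Suc n#} (add_mset 1 lam)
        + (\<Sum>r<n. pw (add_mset (Suc n - Suc r) (replicate_mset (Suc r) 1)) (add_mset 1 lam))"
    unfolding Hk_def by (subst sum.lessThan_Suc_shift) simp
  also have "pw {#Suc n#} (add_mset 1 lam) = 0"
    using assms by (auto simp: pw_def)
  also have "(\<Sum>r<n. pw (add_mset (Suc n - Suc r) (replicate_mset (Suc r) 1)) (add_mset 1 lam))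
      = Hk n lam"
    unfolding Hk_def by (intro sum.cong) (auto simp: pw_def add_mset_commute)
  finally show ?thesis
    by simp
qed

lemma card_Sym_Suc_apply_eq_last:
  assumes "i < Suc m"
  shows "card {x\<in>Sym (Suc m). x i = m} = fact m"
proof -
  define t where "t = transpose i m"
  have t: "t \<in> Sym (Suc m)"
    unfolding t_def using assms by (intro transpose_Sym) auto
  have tt: "y \<circ> t \<circ> t = y" for y :: "nat \<Rightarrow> nat"
    by (simp add: comp_assoc t_def)
  have "bij_betw (\<lambda>y. y \<circ> t) (Sym m) {x\<in>Sym (Suc m). x i = m}"
  proof (rule bij_betw_byWitness[where f'="\<lambda>x. x \<circ> t"])
    have "y \<circ> t \<in> Sym (Suc m) \<and> (y \<circ> t) i = m" if y: "y \<in> Sym m" for y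
      using Sym_comp[OF Sym_mono[OF y] t] Sym_fixes_ge[OF y, of m] by (simp add: t_def)
    then show "(\<lambda>y. y \<circ> t) ` Sym m \<subseteq> {x\<in>Sym (Suc m). x i = m}"
      by auto
    have "x \<circ> t \<in> Sym m" if x: "x \<in> Sym (Suc m)" "x i = m" for x
      using Sym_Suc_iff[OF Sym_comp[OF x(1) t]] x(2) by (simp add: t_def)
    then show "(\<lambda>x. x \<circ> t) ` {x\<in>Sym (Suc m). x i = m} \<subseteq> Sym m"
      by auto
  qed (simp_all add: tt)
  then have "card (Sym m) = card {x\<in>Sym (Suc m). x i = m}"
    by (rule bij_betw_same_card)
  then show ?thesis
    by (simp add: card_Sym)
qed

lemma card_class_fixing_eq:
  assumes "i < n" "j < n"
  shows "card {\<tau>\<in>Sym n. cycle_type n \<tau> = \<mu> \<and> \<tau> i = i}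
       = card {\<tau>\<in>Sym n. cycle_type n \<tau> = \<mu> \<and> \<tau> j = j}"
proof -
  define t where "t = transpose i j"
  have t: "t \<in> Sym n"
    unfolding t_def using assms by (intro transpose_Sym)
  have conj: "t \<circ> \<tau> \<circ> t \<in> Sym n" "cycle_type n (t \<circ> \<tau> \<circ> t) = cycle_type n \<tau>"
    if "\<tau> \<in> Sym n" for \<tau>
    using Sym_conj[OF that t] cycle_type_conj[OF t, of \<tau>] by (simp_all add: t_def)
  have fix_iff: "(t \<circ> \<tau> \<circ> t) j = j \<longleftrightarrow> \<tau> i = i" "(t \<circ> \<tau> \<circ> t) i = i \<longleftrightarrow> \<tau> j = j" for \<tau>
    by (auto simp: t_def transpose_eq_iff)
  have "bij_betw (\<lambda>\<tau>. t \<circ> \<tau> \<circ> t) {\<tau>\<in>Sym n. cycle_type n \<tau> = \<mu> \<and> \<tau> i = i}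
      {\<tau>\<in>Sym n. cycle_type n \<tau> = \<mu> \<and> \<tau> j = j}"
    by (rule bij_betw_byWitness[where f'="\<lambda>\<tau>. t \<circ> \<tau> \<circ> t"])
      (use conj fix_iff in \<open>auto simp: fun_eq_iff t_def\<close>)
  then show ?thesis
    by (rule bij_betw_same_card)
qed

lemma class_fixing_last_eq:
  "{\<tau>\<in>Sym (Suc n). cycle_type (Suc n) \<tau> = add_mset 1 lam \<and> \<tau> n = n}
     = {\<tau>\<in>Sym n. cycle_type n \<tau> = lam}"
proof (intro set_eqI iffI)
  fix \<tau> assume "\<tau> \<in> {\<tau>\<in>Sym (Suc n). cycle_type (Suc n) \<tau> = add_mset 1 lam \<and> \<tau> n = n}"
  then have "\<tau> \<in> Sym n" "cycle_type (Suc n) \<tau> = add_mset 1 lam"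
    using Sym_Suc_iff by auto
  then show "\<tau> \<in> {\<tau>\<in>Sym n. cycle_type n \<tau> = lam}"
    using cycle_type_Suc by simp
next
  fix \<tau> assume "\<tau> \<in> {\<tau>\<in>Sym n. cycle_type n \<tau> = lam}"
  then show "\<tau> \<in> {\<tau>\<in>Sym (Suc n). cycle_type (Suc n) \<tau> = add_mset 1 lam \<and> \<tau> n = n}"
    using Sym_mono[of \<tau> n "Suc n"] Sym_fixes_ge[of \<tau> n n] cycle_type_Suc[of \<tau> n] by auto
qed

text \<open>Double counting of the pairs (\<open>\<tau>\<close>, fixed point of \<open>\<tau>\<close>) with \<open>\<tau>\<close> of type \<open>\<lambda> \<union> {1}\<close>
  in \<open>S\<^sub>n\<^sub>+\<^sub>1\<close>; the number of such \<open>\<tau>\<close> fixing a point \<open>i\<close> does not depend on \<open>i\<close>.\<close>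

lemma class_size_Suc_add_mset_1:
  "Suc (count lam 1) * class_size (Suc n) (add_mset 1 lam) = Suc n * class_size n lam"
proof -
  define C where "C = {\<tau>\<in>Sym (Suc n). cycle_type (Suc n) \<tau> = add_mset 1 lam}"
  have "card {i\<in>{..<Suc n}. \<tau> i = i} = Suc (count lam 1)" if "\<tau> \<in> C" for \<tau>
    using that count_cycle_type_1[of \<tau> "Suc n"] by (simp add: C_def lessThan_def)
  then have "card C * Suc (count lam 1) = (\<Sum>\<tau>\<in>C. card {i\<in>{..<Suc n}. \<tau> i = i})"
    by simp
  also have "\<dots> = (\<Sum>i<Suc n. card {\<tau>\<in>C. \<tau> i = i})"
    by (rule sum_card_filter_swap) (simp_all add: C_def finite_Sym)
  also have "\<dots> = (\<Sum>i<Suc n. card {\<tau>\<in>C. \<tau> n = n})"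
  proof (intro sum.cong refl)
    fix i assume "i \<in> {..<Suc n}"
    then show "card {\<tau>\<in>C. \<tau> i = i} = card {\<tau>\<in>C. \<tau> n = n}"
      using card_class_fixing_eq[of i "Suc n" n "add_mset 1 lam"] by (simp add: C_def conj_assoc)
  qed
  also have "{\<tau>\<in>C. \<tau> n = n} = {\<tau>\<in>Sym n. cycle_type n \<tau> = lam}"
    using class_fixing_last_eq by (simp add: C_def conj_assoc)
  finally show ?thesis
    by (simp add: C_def class_size_def mult.commute)
qed

lemma conj_mem_Sym_iff:
  assumes x: "x \<in> Sym (Suc m)" and \<sigma>: "\<sigma> \<in> Sym (Suc m)"
  shows "x \<circ> \<sigma> \<circ> inv x \<in> Sym m \<longleftrightarrow> \<sigma> (inv x m) = inv x m"
proof -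
  have "x \<circ> \<sigma> \<circ> inv x \<in> Sym m \<longleftrightarrow> x (\<sigma> (inv x m)) = m"
    using Sym_Suc_iff[OF Sym_conj[OF \<sigma> x]] by simp
  also have "\<dots> \<longleftrightarrow> \<sigma> (inv x m) = inv x m"
    using permutes_inv_eq[OF x[unfolded mem_Sym_iff], of m "\<sigma> (inv x m)"] Sym_inv_apply[OF x]
    by auto
  finally show ?thesis .
qed

lemma ind_char_Sym_Suc:
  assumes "class_fun (Suc m) \<chi>" "\<sigma> \<in> Sym (Suc m)"
  shows "ind_char (Sym (Suc m)) (Sym m) \<chi> \<sigma> = \<chi> \<sigma> * card {i. i < Suc m \<and> \<sigma> i = i}"
proof -
  have "(\<Sum>x\<in>Sym (Suc m). if x \<circ> \<sigma> \<circ> inv x \<in> Sym m then \<chi> (x \<circ> \<sigma> \<circ> inv x) else 0)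
      = (\<Sum>x\<in>Sym (Suc m). if x \<circ> \<sigma> \<circ> inv x \<in> Sym m then \<chi> \<sigma> else 0)"
    using assms unfolding class_fun_def by (intro sum.cong) auto
  also have "\<dots> = \<chi> \<sigma> * card {x\<in>Sym (Suc m). x \<circ> \<sigma> \<circ> inv x \<in> Sym m}"
    using finite_Sym by (simp add: sum.If_cases Int_def conj_commute)
  also have "{x\<in>Sym (Suc m). x \<circ> \<sigma> \<circ> inv x \<in> Sym m} = {x\<in>Sym (Suc m). \<sigma> (inv x m) = inv x m}"
    using conj_mem_Sym_iff[OF _ assms(2)] by blast
  also have "card {x\<in>Sym (Suc m). \<sigma> (inv x m) = inv x m}
      = (\<Sum>i\<in>{i\<in>{..<Suc m}. \<sigma> i = i}. card {x\<in>Sym (Suc m). inv x m = i})"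
    by (rule card_filter_eq_sum_card_fibres) (auto simp: finite_Sym intro: Sym_less[OF Sym_inv])
  also have "\<dots> = (\<Sum>i\<in>{i\<in>{..<Suc m}. \<sigma> i = i}. fact m)"
  proof (intro sum.cong refl)
    fix i assume "i \<in> {i\<in>{..<Suc m}. \<sigma> i = i}"
    moreover have "{x\<in>Sym (Suc m). inv x m = i} = {x\<in>Sym (Suc m). x i = m}"
      by (auto simp: mem_Sym_iff permutes_inv_eq permutes_inverses)
    ultimately show "card {x\<in>Sym (Suc m). inv x m = i} = fact m"
      using card_Sym_Suc_apply_eq_last by simp
  qed
  also have "(\<Sum>i\<in>{i\<in>{..<Suc m}. \<sigma> i = i}. fact m) = card {i. i < Suc m \<and> \<sigma> i = i} * fact m"
    by (simp add: lessThan_def)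
  finally have sum_eq: "(\<Sum>x\<in>Sym (Suc m). if x \<circ> \<sigma> \<circ> inv x \<in> Sym m then \<chi> (x \<circ> \<sigma> \<circ> inv x) else 0)
      = \<chi> \<sigma> * of_nat (card {i. i < Suc m \<and> \<sigma> i = i} * fact m)" .
  show ?thesis
    unfolding ind_char_def card_Sym sum_eq by simp
qed

theorem Hk_char_Suc_eq:
  assumes n: "1 \<le> n" and \<sigma>: "\<sigma> \<in> Sym n"
    and \<chi>: "class_fun n \<chi>" "frob n \<chi> = Hk n"
    and \<psi>: "class_fun (Suc n) \<psi>" "frob (Suc n) \<psi> = Hk (Suc n)"
  shows "\<psi> \<sigma> = \<chi> \<sigma> + ind_char (Sym n) (Sym (n - 1)) \<chi> \<sigma>"
proof -
  define lam where "lam = cycle_type n \<sigma>"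
  define f where "f = count lam 1"
  have \<sigma>': "\<sigma> \<in> Sym (Suc n)"
    using Sym_mono[OF \<sigma>] by simp
  have c: "class_size n lam > 0" and c': "class_size (Suc n) (add_mset 1 lam) > 0"
    using class_size_pos[OF \<sigma>] class_size_pos[OF \<sigma>'] cycle_type_Suc[OF \<sigma>] by (simp_all add: lam_def)
  have \<chi>_\<sigma>: "\<chi> \<sigma> = Hk n lam * fact n / class_size n lam"
    using class_fun_eq_frob[OF \<chi>(1) \<sigma>] \<chi>(2) by (simp add: lam_def)
  have "\<psi> \<sigma> = Hk n lam * fact (Suc n) / class_size (Suc n) (add_mset 1 lam)"
    using class_fun_eq_frob[OF \<psi>(1) \<sigma>'] \<psi>(2) cycle_type_Suc[OF \<sigma>] Hk_Suc_add_mset_1[OF n]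
    by (simp add: lam_def)
  also have "\<dots> = Hk n lam * fact n * Suc f / class_size n lam"
  proof -
    have "Suc f * class_size (Suc n) (add_mset 1 lam) = Suc n * class_size n lam"
      unfolding f_def by (rule class_size_Suc_add_mset_1)
    then have "of_nat (Suc f) * (of_nat (class_size (Suc n) (add_mset 1 lam)) :: complex)
        = of_nat (Suc n) * of_nat (class_size n lam)"
      by (metis of_nat_mult)
    from arg_cong[OF this, of "\<lambda>z. fact n * z"]
    have "fact n * of_nat (Suc f) * of_nat (class_size (Suc n) (add_mset 1 lam))
        = (fact (Suc n) * of_nat (class_size n lam) :: complex)"
      by (simp add: fact_Suc algebra_simps)
    then show ?thesis
      using c c' by (simp add: frac_eq_eq mult.assoc)
  qed
  also have "\<dots> = \<chi> \<sigma> + \<chi> \<sigma> * f"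
    using \<chi>_\<sigma> c by (simp add: field_simps)
  also have "\<chi> \<sigma> * f = ind_char (Sym n) (Sym (n - 1)) \<chi> \<sigma>"
    using ind_char_Sym_Suc[of "n - 1" \<chi> \<sigma>] n \<chi>(1) \<sigma> count_cycle_type_1[OF \<sigma>] by (simp add: f_def lam_def)
  finally show ?thesis .
qed

section \<open>The cyclic group generated by the long cycle\<close>

lemma funpow_cyc: "(cyc n ^^ j) i = (if i < n then (i + j) mod n else i)"
proof (induct j)
  case (Suc j)
  show ?case
  proof (cases "i < n")
    case True
    then have "(i + j) mod n < n"
      by simp
    then show ?thesis
      using Suc True by (simp add: cyc_def mod_Suc_eq)
  qed (use Suc in \<open>simp add: cyc_def\<close>)
qed simp

lemma funpow_cyc_funpow: "i < n \<Longrightarrow> ((cyc n ^^ j) ^^ k) i = (i + j * k) mod n"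
  by (simp add: funpow_mult funpow_cyc)

lemma cyc_Sym: "cyc n \<in> Sym n"
proof -
  have "inj_on (cyc n) {..<n}"
  proof (rule inj_onI)
    fix a b assume "a \<in> {..<n}" "b \<in> {..<n}" "cyc n a = cyc n b"
    then show "a = b"
      by (auto simp: cyc_def mod_Suc split: if_splits)
  qed
  moreover have "cyc n ` {..<n} \<subseteq> {..<n}"
    by (auto simp: cyc_def)
  ultimately show ?thesis
    by (rule Sym_if_inj_on) (simp add: cyc_def)
qed

lemma funpow_cyc_Sym: "cyc n ^^ j \<in> Sym n"
proof (induct j)
  case (Suc j)
  then show ?case
    using Sym_comp[OF cyc_Sym Suc] by (metis funpow.simps(2))
qed (simp add: Sym_id[unfolded id_def])

lemma inj_on_funpow_cyc: "inj_on (\<lambda>j. cyc n ^^ j) {..<n}"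
proof (rule inj_onI)
  fix a b assume "a \<in> {..<n}" "b \<in> {..<n}" "cyc n ^^ a = cyc n ^^ b"
  then have "(cyc n ^^ a) 0 = (cyc n ^^ b) 0"
    by simp
  then show "a = b"
    using \<open>a \<in> {..<n}\<close> \<open>b \<in> {..<n}\<close> by (simp add: funpow_cyc)
qed

lemma cyc_grp_eq_image: "cyc_grp n = (\<lambda>j. cyc n ^^ j) ` {..<n}"
  by (auto simp: cyc_grp_def)

lemma card_cyc_grp: "card (cyc_grp n) = n"
  by (simp add: cyc_grp_eq_image card_image inj_on_funpow_cyc)

lemma cyc_grp_subset_Sym: "cyc_grp n \<subseteq> Sym n"
  using funpow_cyc_Sym by (auto simp: cyc_grp_def)

lemma funpow_cyc_commute: "(cyc n ^^ j) \<circ> cyc n = cyc n \<circ> (cyc n ^^ j)"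
  by (metis funpow_Suc_right funpow.simps(2))

lemma commute_cyc_imp_eq_funpow_cyc:
  assumes \<rho>: "\<rho> \<in> Sym n" and comm: "\<rho> \<circ> cyc n = cyc n \<circ> \<rho>"
  shows "\<rho> = cyc n ^^ \<rho> 0"
proof
  fix i
  have \<rho>_funpow: "\<rho> ((cyc n ^^ k) x) = (cyc n ^^ k) (\<rho> x)" for k x
  proof (induct k)
    case (Suc k)
    have "\<rho> (cyc n ((cyc n ^^ k) x)) = cyc n (\<rho> ((cyc n ^^ k) x))"
      using comm by (metis comp_apply)
    then show ?case
      using Suc by simp
  qed simp
  show "\<rho> i = (cyc n ^^ \<rho> 0) i"
  proof (cases "i < n")
    case True
    then have \<rho>0: "\<rho> 0 < n"
      using Sym_less[OF \<rho>] by simp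
    have "\<rho> i = \<rho> ((cyc n ^^ i) 0)"
      using True by (simp add: funpow_cyc)
    also have "\<dots> = (cyc n ^^ i) (\<rho> 0)"
      by (rule \<rho>_funpow)
    also have "\<dots> = (\<rho> 0 + i) mod n"
      using \<rho>0 by (simp add: funpow_cyc)
    also have "\<dots> = (cyc n ^^ \<rho> 0) i"
      using True by (simp add: funpow_cyc add.commute)
    finally show ?thesis .
  next
    case False
    then show ?thesis
      using Sym_fixes_ge[OF \<rho>] by (simp add: funpow_cyc)
  qed
qed

lemma mem_cyc_grp_iff_commute:
  assumes \<rho>: "\<rho> \<in> Sym n" and n: "1 \<le> n"
  shows "\<rho> \<in> cyc_grp n \<longleftrightarrow> \<rho> \<circ> cyc n = cyc n \<circ> \<rho>"
proof
  assume "\<rho> \<in> cyc_grp n"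
  then show "\<rho> \<circ> cyc n = cyc n \<circ> \<rho>"
    using funpow_cyc_commute by (auto simp: cyc_grp_def)
next
  assume "\<rho> \<circ> cyc n = cyc n \<circ> \<rho>"
  moreover have "\<rho> 0 < n"
    using Sym_less[OF \<rho>] n by auto
  ultimately show "\<rho> \<in> cyc_grp n"
    using commute_cyc_imp_eq_funpow_cyc[OF \<rho>] unfolding cyc_grp_def by blast
qed

lemma exists_add_mult_mod_eq:
  fixes j n x y :: nat
  assumes "0 < j" "x < n" "y < n" "y mod gcd j n = x mod gcd j n"
  shows "\<exists>k. (x + j * k) mod n = y"
proof -
  obtain u v where uv: "j * u = n * v + gcd j n"
    using bezout_nat[of j n] assms(1) by auto
  have "(y + n) mod gcd j n = x mod gcd j n"
    using assms(4) by (simp add: mod_add_eq[symmetric])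
  then have "gcd j n dvd y + n - x"
    using assms(2) by (subst mod_eq_dvd_iff_nat[symmetric]) auto
  then obtain s where s: "y + n - x = gcd j n * s"
    by blast
  have "x + j * (u * s) = x + (n * v + gcd j n) * s"
    using uv by (metis mult.assoc)
  also have "\<dots> = y + n * (1 + v * s)"
    using s assms(2) by (simp add: algebra_simps)
  finally have "(x + j * (u * s)) mod n = (y + n * (1 + v * s)) mod n"
    by simp
  also have "\<dots> = y"
    using assms(3) by (simp only: mod_mult_self2 mod_less)
  finally show ?thesis
    by blast
qed

lemma orb_funpow_cyc:
  assumes j: "j < n" and x: "x < n"
  shows "orb (cyc n ^^ j) x = {y. y < n \<and> y mod gcd j n = x mod gcd j n}"
proof (intro set_eqI iffI)
  fix y assume "y \<in> orb (cyc n ^^ j) x"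
  then obtain k where y: "y = (x + j * k) mod n"
    unfolding orb_def using funpow_cyc_funpow[OF x] by auto
  have "y mod gcd j n = (x + j * k) mod gcd j n"
    unfolding y by (simp add: mod_mod_cancel)
  also have "\<dots> = x mod gcd j n"
    by (metis gcd_dvd1 dvd_mult2 mod_add_right_eq add.right_neutral dvd_imp_mod_0)
  finally show "y \<in> {y. y < n \<and> y mod gcd j n = x mod gcd j n}"
    using y j by simp
next
  fix y assume "y \<in> {y. y < n \<and> y mod gcd j n = x mod gcd j n}"
  then have y: "y < n" "y mod gcd j n = x mod gcd j n"
    by auto
  show "y \<in> orb (cyc n ^^ j) x"
  proof (cases "j = 0")
    case True
    then show ?thesis
      using y x self_in_orb by simp
  next
    case False
    then obtain k where "(x + j * k) mod n = y"
      using exists_add_mult_mod_eq[OF _ x y(1,2)] by blast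
    then have "((cyc n ^^ j) ^^ k) x = y"
      using funpow_cyc_funpow[OF x] by simp
    then show ?thesis
      using funpow_in_orb by metis
  qed
qed

lemma card_residue_class:
  fixes g n r :: nat
  assumes g: "g dvd n" and r: "r < g"
  shows "card {y. y < n \<and> y mod g = r} = n div g"
proof -
  have "{y. y < n \<and> y mod g = r} = (\<lambda>q. r + g * q) ` {..<n div g}"
  proof (intro set_eqI iffI)
    fix y assume "y \<in> {y. y < n \<and> y mod g = r}"
    then have y: "y < n" "y mod g = r"
      by auto
    have "y = r + g * (y div g)"
      using y(2) by (metis mod_mult_div_eq add.commute)
    moreover have "y div g < n div g"
    proof -
      have "n = g * (n div g)" "0 < g"
        using g r by simp_all
      then show ?thesis
        using y(1) by (metis div_less_iff_less_mult mult.commute)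
    qed
    ultimately show "y \<in> (\<lambda>q. r + g * q) ` {..<n div g}"
      by blast
  next
    fix y assume "y \<in> (\<lambda>q. r + g * q) ` {..<n div g}"
    then obtain q where q: "q < n div g" "y = r + g * q"
      by auto
    have "g * (q + 1) \<le> g * (n div g)"
      using q(1) by (intro mult_le_mono2) simp
    then have "y < n"
      using q(2) r g by simp
    then show "y \<in> {y. y < n \<and> y mod g = r}"
      using q(2) r by simp
  qed
  moreover have "inj_on (\<lambda>q. r + g * q) {..<n div g}"
    using r by (auto simp: inj_on_def)
  ultimately show ?thesis
    by (simp add: card_image)
qed

lemma orbs_funpow_cyc:
  assumes j: "j < n"
  shows "orbs n (cyc n ^^ j) = (\<lambda>r. {y. y < n \<and> y mod gcd j n = r}) ` {..<gcd j n}"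
proof (intro set_eqI iffI)
  fix A assume "A \<in> orbs n (cyc n ^^ j)"
  then show "A \<in> (\<lambda>r. {y. y < n \<and> y mod gcd j n = r}) ` {..<gcd j n}"
    using orb_funpow_cyc[OF j] j by (auto simp: orbs_def)
next
  fix A assume "A \<in> (\<lambda>r. {y. y < n \<and> y mod gcd j n = r}) ` {..<gcd j n}"
  then obtain r where r: "r < gcd j n" "A = {y. y < n \<and> y mod gcd j n = r}"
    by auto
  then have "r < n"
    using j by (metis gcd_le2_nat not_less0 order_less_le_trans)
  then have "A = orb (cyc n ^^ j) r"
    using orb_funpow_cyc[OF j] r by simp
  then show "A \<in> orbs n (cyc n ^^ j)"
    using \<open>r < n\<close> by (auto simp: orbs_def)
qed

lemma cycle_type_funpow_cyc:
  assumes j: "j < n"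
  shows "cycle_type n (cyc n ^^ j) = replicate_mset (gcd j n) (n div gcd j n)"
proof -
  define g where "g = gcd j n"
  define R where "R r = {y. y < n \<and> y mod g = r}" for r
  have inj: "inj_on R {..<g}"
  proof (rule inj_onI)
    fix r r' assume "r \<in> {..<g}" "r' \<in> {..<g}" "R r = R r'"
    moreover have "g \<le> n"
      using j by (simp add: g_def)
    ultimately show "r = r'"
      unfolding R_def by (metis (mono_tags, lifting) lessThan_iff mem_Collect_eq
        mod_less order_less_le_trans)
  qed
  have "orbs n (cyc n ^^ j) = R ` {..<g}"
    using orbs_funpow_cyc[OF j] by (simp add: R_def g_def)
  then have "cycle_type n (cyc n ^^ j) = image_mset card (image_mset R (mset_set {..<g}))"
    unfolding cycle_type_eq_orbs image_mset_mset_set[OF inj] by simp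
  also have "\<dots> = image_mset (card \<circ> R) (mset_set {..<g})"
    by (simp add: multiset.map_comp)
  also have "\<dots> = image_mset (\<lambda>_. n div g) (mset_set {..<g})"
    using card_residue_class[of g n] by (intro image_mset_cong) (simp add: R_def g_def)
  finally show ?thesis
    by (simp add: image_mset_const_eq g_def)
qed

lemma cycle_type_cyc: "1 \<le> n \<Longrightarrow> cycle_type n (cyc n) = {#n#}"
proof (cases "n = 1")
  case True
  moreover have "cyc 1 = cyc 1 ^^ 0"
    by (auto simp: cyc_def)
  ultimately show ?thesis
    using cycle_type_funpow_cyc[of 0 1] by simp
qed (use cycle_type_funpow_cyc[of 1 n] in simp)

lemma frob_ind_char:
  assumes H: "H \<subseteq> Sym n"
  shows "frob n (ind_char (Sym n) H \<chi>) lam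
       = (\<Sum>h\<in>H. if cycle_type n h = lam then \<chi> h else 0) / card H"
proof -
  define F :: "(nat \<Rightarrow> nat) \<Rightarrow> (nat \<Rightarrow> nat) \<Rightarrow> complex" where "F x \<sigma> = (if x \<circ> \<sigma> \<circ> inv x \<in> H then \<chi> (x \<circ> \<sigma> \<circ> inv x) else 0)" for x \<sigma>
  define G :: "(nat \<Rightarrow> nat) \<Rightarrow> complex" where "G h = (if cycle_type n h = lam \<and> h \<in> H then \<chi> h else 0)" for h
  have inner: "(\<Sum>\<sigma>\<in>Sym n. if cycle_type n \<sigma> = lam then F x \<sigma> else 0)
      = (\<Sum>h\<in>H. if cycle_type n h = lam then \<chi> h else 0)" if x: "x \<in> Sym n" for x
  proof -
    have "(\<Sum>\<sigma>\<in>Sym n. if cycle_type n \<sigma> = lam then F x \<sigma> else 0) = (\<Sum>\<sigma>\<in>Sym n. G (x \<circ> \<sigma> \<circ> inv x))"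
      using cycle_type_conj[OF x] by (intro sum.cong refl) (auto simp: F_def G_def)
    also have "\<dots> = (\<Sum>h\<in>Sym n. G h)"
      by (rule sum.reindex_bij_betw[OF bij_betw_Sym_conj[OF x]])
    also have "\<dots> = (\<Sum>h\<in>H. G h)"
      using H finite_Sym by (intro sum.mono_neutral_right) (auto simp: G_def)
    finally show ?thesis
      by (auto simp: G_def intro: sum.cong)
  qed
  have "frob n (ind_char (Sym n) H \<chi>) lam
      = (\<Sum>\<sigma>\<in>Sym n. if cycle_type n \<sigma> = lam then (\<Sum>x\<in>Sym n. F x \<sigma>) / card H else 0) / fact n"
    unfolding frob_def ind_char_def F_def ..
  also have "\<dots> = (\<Sum>\<sigma>\<in>Sym n. (\<Sum>x\<in>Sym n. if cycle_type n \<sigma> = lam then F x \<sigma> else 0) / card H) / fact n"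
    by (intro arg_cong2[where f="(/)"] sum.cong refl) simp
  also have "\<dots> = (\<Sum>\<sigma>\<in>Sym n. \<Sum>x\<in>Sym n. if cycle_type n \<sigma> = lam then F x \<sigma> else 0) / card H / fact n"
    by (simp only: sum_divide_distrib[symmetric])
  also have "\<dots> = (\<Sum>x\<in>Sym n. \<Sum>\<sigma>\<in>Sym n. if cycle_type n \<sigma> = lam then F x \<sigma> else 0) / card H / fact n"
    by (subst sum.swap) (rule refl)
  finally show ?thesis
    using inner by (simp add: card_Sym)
qed

lemma frob_ind_char_cyc_grp:
  "frob n (ind_char (Sym n) (cyc_grp n) \<chi>) lam
     = (\<Sum>j<n. if replicate_mset (gcd j n) (n div gcd j n) = lam then \<chi> (cyc n ^^ j) else 0) / n"
proof -
  have "(\<Sum>h\<in>cyc_grp n. if cycle_type n h = lam then \<chi> h else 0)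
      = (\<Sum>j<n. if cycle_type n (cyc n ^^ j) = lam then \<chi> (cyc n ^^ j) else 0)"
    unfolding cyc_grp_eq_image by (subst sum.reindex[OF inj_on_funpow_cyc]) simp
  also have "\<dots> = (\<Sum>j<n. if replicate_mset (gcd j n) (n div gcd j n) = lam then \<chi> (cyc n ^^ j) else 0)"
    by (intro sum.cong refl) (simp add: cycle_type_funpow_cyc)
  finally show ?thesis
    by (simp add: frob_ind_char[OF cyc_grp_subset_Sym] card_cyc_grp)
qed

lemma conj_cyc_eq_iff:
  assumes n: "1 \<le> n" and x: "x \<in> Sym n" and x0: "x0 \<in> Sym n"
  shows "inv x \<circ> cyc n \<circ> x = inv x0 \<circ> cyc n \<circ> x0 \<longleftrightarrow> x \<circ> inv x0 \<in> cyc_grp n"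
proof -
  have "inv x \<circ> cyc n \<circ> x = inv x0 \<circ> cyc n \<circ> x0 \<longleftrightarrow> (x \<circ> inv x0) \<circ> cyc n = cyc n \<circ> (x \<circ> inv x0)"
  proof
    assume "inv x \<circ> cyc n \<circ> x = inv x0 \<circ> cyc n \<circ> x0"
    then have "x \<circ> (inv x \<circ> cyc n \<circ> x) \<circ> inv x0 = x \<circ> (inv x0 \<circ> cyc n \<circ> x0) \<circ> inv x0"
      by simp
    then show "(x \<circ> inv x0) \<circ> cyc n = cyc n \<circ> (x \<circ> inv x0)"
      by (simp add: o_assoc Sym_comp_inv_cancel[OF x] Sym_comp_inv_cancel[OF x0])
  next
    assume "(x \<circ> inv x0) \<circ> cyc n = cyc n \<circ> (x \<circ> inv x0)"
    then have "inv x \<circ> ((x \<circ> inv x0) \<circ> cyc n) \<circ> x0 = inv x \<circ> (cyc n \<circ> (x \<circ> inv x0)) \<circ> x0"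
      by simp
    then show "inv x \<circ> cyc n \<circ> x = inv x0 \<circ> cyc n \<circ> x0"
      by (simp add: o_assoc Sym_comp_inv_cancel[OF x] Sym_comp_inv_cancel[OF x0])
  qed
  also have "\<dots> \<longleftrightarrow> x \<circ> inv x0 \<in> cyc_grp n"
    using mem_cyc_grp_iff_commute[OF Sym_comp[OF x Sym_inv[OF x0]] n] by simp
  finally show ?thesis .
qed

text \<open>The \<open>n\<close>-cycles are the conjugates \<open>x\<^sup>-\<^sup>1 c x\<close> of the long cycle \<open>c\<close>, each obtained from
  the \<open>n\<close> elements of a coset of the centraliser \<open>cyc_grp n\<close> of \<open>c\<close>.\<close>

lemma card_conj_cyc_eq:
  assumes n: "1 \<le> n" and \<tau>: "\<tau> \<in> Sym n" "cycle_type n \<tau> = {#n#}"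
  shows "card {x\<in>Sym n. inv x \<circ> cyc n \<circ> x = \<tau>} = n"
proof -
  obtain \<phi> where \<phi>: "\<phi> \<in> Sym n" "\<tau> = \<phi> \<circ> cyc n \<circ> inv \<phi>"
    using conj_if_cycle_type_eq[OF cyc_Sym \<tau>(1)] \<tau>(2) cycle_type_cyc[OF n] by auto
  define x0 where "x0 = inv \<phi>"
  have x0: "x0 \<in> Sym n" "\<tau> = inv x0 \<circ> cyc n \<circ> x0"
    using \<phi> Sym_inv Sym_inv_inv by (auto simp: x0_def)
  have "{x\<in>Sym n. inv x \<circ> cyc n \<circ> x = \<tau>} = (\<lambda>\<rho>. \<rho> \<circ> x0) ` cyc_grp n"
  proof (intro set_eqI iffI)
    fix x assume "x \<in> {x\<in>Sym n. inv x \<circ> cyc n \<circ> x = \<tau>}"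
    then have "x \<circ> inv x0 \<in> cyc_grp n" "x = (x \<circ> inv x0) \<circ> x0"
      using conj_cyc_eq_iff[OF n _ x0(1)] x0(2) by (auto simp: Sym_comp_inv_cancel(4)[OF x0(1)])
    then show "x \<in> (\<lambda>\<rho>. \<rho> \<circ> x0) ` cyc_grp n"
      by blast
  next
    fix x assume "x \<in> (\<lambda>\<rho>. \<rho> \<circ> x0) ` cyc_grp n"
    then obtain \<rho> where \<rho>: "\<rho> \<in> cyc_grp n" "x = \<rho> \<circ> x0"
      by blast
    then have x: "x \<in> Sym n"
      using cyc_grp_subset_Sym x0(1) Sym_comp by blast
    moreover have "x \<circ> inv x0 = \<rho>"
      using \<rho>(2) Sym_comp_inv_cancel(3)[OF x0(1)] by simp
    ultimately show "x \<in> {x\<in>Sym n. inv x \<circ> cyc n \<circ> x = \<tau>}"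
      using conj_cyc_eq_iff[OF n x x0(1)] \<rho>(1) x0(2) by simp
  qed
  moreover have "inj_on (\<lambda>\<rho>. \<rho> \<circ> x0) (cyc_grp n)"
    by (rule inj_onI) (metis Sym_comp_inv_cancel(3)[OF x0(1)])
  ultimately show ?thesis
    by (simp add: card_image card_cyc_grp)
qed

lemma conj_mem_cyc_grp_iff:
  assumes n: "1 \<le> n" and \<sigma>: "\<sigma> \<in> Sym n" and x: "x \<in> Sym n"
  shows "x \<circ> \<sigma> \<circ> inv x \<in> cyc_grp n
    \<longleftrightarrow> \<sigma> \<circ> (inv x \<circ> cyc n \<circ> x) \<circ> inv \<sigma> = inv x \<circ> cyc n \<circ> x"
proof -
  have conj_eq_iff: "a = b \<longleftrightarrow> inv x \<circ> a \<circ> x = inv x \<circ> b \<circ> x" for a b :: "nat \<Rightarrow> nat"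
  proof
    assume "inv x \<circ> a \<circ> x = inv x \<circ> b \<circ> x"
    then have "x \<circ> (inv x \<circ> a \<circ> x) \<circ> inv x = x \<circ> (inv x \<circ> b \<circ> x) \<circ> inv x"
      by simp
    then show "a = b"
      by (simp add: o_assoc Sym_comp_inv_cancel[OF x])
  qed simp
  have "x \<circ> \<sigma> \<circ> inv x \<in> cyc_grp n \<longleftrightarrow> (x \<circ> \<sigma> \<circ> inv x) \<circ> cyc n = cyc n \<circ> (x \<circ> \<sigma> \<circ> inv x)"
    by (rule mem_cyc_grp_iff_commute[OF Sym_conj[OF \<sigma> x] n])
  also have "\<dots> \<longleftrightarrow> \<sigma> \<circ> (inv x \<circ> cyc n \<circ> x) = (inv x \<circ> cyc n \<circ> x) \<circ> \<sigma>"
    by (subst conj_eq_iff) (simp add: o_assoc Sym_comp_inv_cancel[OF x])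
  also have "\<dots> \<longleftrightarrow> \<sigma> \<circ> (inv x \<circ> cyc n \<circ> x) \<circ> inv \<sigma> = inv x \<circ> cyc n \<circ> x"
  proof
    assume "\<sigma> \<circ> (inv x \<circ> cyc n \<circ> x) \<circ> inv \<sigma> = inv x \<circ> cyc n \<circ> x"
    then have "\<sigma> \<circ> (inv x \<circ> cyc n \<circ> x) \<circ> inv \<sigma> \<circ> \<sigma> = inv x \<circ> cyc n \<circ> x \<circ> \<sigma>"
      by simp
    then show "\<sigma> \<circ> (inv x \<circ> cyc n \<circ> x) = inv x \<circ> cyc n \<circ> x \<circ> \<sigma>"
      by (simp add: Sym_comp_inv_cancel(4)[OF \<sigma>])
  qed (simp add: Sym_comp_inv_cancel(3)[OF \<sigma>])
  finally show ?thesis .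
qed

lemma conj_char_eq_ind_char:
  assumes n: "1 \<le> n" and \<sigma>: "\<sigma> \<in> Sym n"
  shows "conj_char n \<sigma> = ind_char (Sym n) (cyc_grp n) (\<lambda>_. 1) \<sigma>"
proof -
  define g :: "(nat \<Rightarrow> nat) \<Rightarrow> nat \<Rightarrow> nat" where "g x = inv x \<circ> cyc n \<circ> x" for x
  define NC where "NC = {\<tau>\<in>Sym n. cycle_type n \<tau> = {#n#}}"
  have g: "g x \<in> NC" if x: "x \<in> Sym n" for x
    using Sym_conj[OF cyc_Sym Sym_inv[OF x]] cycle_type_conj[OF Sym_inv[OF x]] cycle_type_cyc[OF n]
    by (simp add: NC_def g_def Sym_inv_inv[OF x])
  have "card {x\<in>Sym n. x \<circ> \<sigma> \<circ> inv x \<in> cyc_grp n} = card {x\<in>Sym n. \<sigma> \<circ> g x \<circ> inv \<sigma> = g x}"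
    using conj_mem_cyc_grp_iff[OF n \<sigma>] unfolding g_def
    by (intro arg_cong[where f=card] Collect_cong) blast
  also have "\<dots> = (\<Sum>\<tau>\<in>{\<tau>\<in>NC. \<sigma> \<circ> \<tau> \<circ> inv \<sigma> = \<tau>}. card {x\<in>Sym n. g x = \<tau>})"
    by (rule card_filter_eq_sum_card_fibres) (use g in \<open>auto simp: NC_def finite_Sym\<close>)
  also have "\<dots> = (\<Sum>\<tau>\<in>{\<tau>\<in>NC. \<sigma> \<circ> \<tau> \<circ> inv \<sigma> = \<tau>}. n)"
    using card_conj_cyc_eq[OF n] by (intro sum.cong) (auto simp: NC_def g_def)
  finally have "card {x\<in>Sym n. x \<circ> \<sigma> \<circ> inv x \<in> cyc_grp n}
      = n * card {\<tau>\<in>Sym n. cycle_type n \<tau> = {#n#} \<and> \<sigma> \<circ> \<tau> \<circ> inv \<sigma> = \<tau>}"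
    by (simp add: NC_def conj_assoc)
  moreover have "(\<Sum>x\<in>Sym n. if x \<circ> \<sigma> \<circ> inv x \<in> cyc_grp n then (1::complex) else 0)
      = card {x\<in>Sym n. x \<circ> \<sigma> \<circ> inv x \<in> cyc_grp n}"
    using finite_Sym by (simp add: sum.If_cases Int_def conj_commute)
  ultimately show ?thesis
    using n by (simp add: ind_char_def conj_char_def card_cyc_grp)
qed

lemma frob_conj_char:
  assumes "1 \<le> n"
  shows "frob n (conj_char n) lam
     = card {j. j < n \<and> replicate_mset (gcd j n) (n div gcd j n) = lam} / n"
proof -
  have "frob n (conj_char n) = frob n (ind_char (Sym n) (cyc_grp n) (\<lambda>_. 1))"
    by (rule frob_cong) (rule conj_char_eq_ind_char[OF assms])
  then show ?thesis
    by (simp add: frob_ind_char_cyc_grp sum.If_cases lessThan_def Int_def conj_commute)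
qed

section \<open>Roots of unity and Ramanujan sums\<close>

definition unit_root :: "nat \<Rightarrow> complex" where
  "unit_root n = exp (2 * pi * \<i> / of_nat n)"

definition ramanujan_sum :: "nat \<Rightarrow> complex" where
  "ramanujan_sum t = (\<Sum>i | i < t \<and> coprime i t. unit_root t ^ i)"

lemma unit_root_power: "unit_root n ^ k = exp (2 * pi * \<i> * of_nat k / of_nat n)"
  unfolding unit_root_def exp_of_nat_mult[symmetric] by (simp add: field_simps)

lemma unit_root_power_mult:
  assumes "a dvd d" "0 < a"
  shows "unit_root d ^ (a * i) = unit_root (d div a) ^ i"
proof -
  obtain q where q: "d = a * q"
    using assms(1) by blast
  have "(2 * pi * \<i> * of_nat (a * i) / of_nat d :: complex) = 2 * pi * \<i> * of_nat i / of_nat q"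
    using q assms(2) by (cases "q = 0") (simp_all add: field_simps)
  moreover have "d div a = q"
    using q assms(2) by simp
  ultimately show ?thesis
    by (simp add: unit_root_power)
qed

lemma unit_root_power_self: "0 < k \<Longrightarrow> unit_root k ^ k = 1"
  by (simp add: unit_root_power)

lemma unit_root_neq_1:
  assumes "1 < k"
  shows "unit_root k \<noteq> 1"
proof
  assume "unit_root k = 1"
  then have "cis (2 * pi / real k) = 1"
    unfolding unit_root_def cis_conv_exp by (simp add: field_simps)
  then have "cos (2 * pi / real k) = 1"
    by (simp add: complex_eq_iff)
  then obtain z :: int where z: "2 * pi / real k = of_int z * 2 * pi"
    by (auto simp: cos_one_2pi_int)
  then have "real k * of_int z = 1"
    using assms pi_gt_zero by (simp add: field_simps)
  then have "int k * z = 1"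
    by (metis of_int_1 of_int_eq_iff of_int_mult of_int_of_nat_eq)
  then show False
    using assms by (auto simp: zmult_eq_1_iff)
qed

lemma sum_unit_root_powers: "0 < k \<Longrightarrow> (\<Sum>i<k. unit_root k ^ i) = (if k = 1 then 1 else 0)"
  using geometric_sum[OF unit_root_neq_1, of k k] unit_root_power_self[of k] by auto

lemma gcd_eq_set_eq_image:
  fixes m N :: nat
  assumes "0 < m" "m dvd N"
  shows "{j. j < N \<and> gcd j N = m} = (*) m ` {i. i < N div m \<and> coprime i (N div m)}"
proof -
  obtain q where q: "N = m * q"
    using assms(2) by blast
  have Nq: "N div m = q"
    using q assms(1) by simp
  show ?thesis
    unfolding Nq
  proof (intro set_eqI iffI)
    fix j assume "j \<in> {j. j < N \<and> gcd j N = m}"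
    then have j: "j < N" "gcd j N = m"
      by auto
    then obtain i where i: "j = m * i"
      by (metis gcd_dvd1 dvdE)
    have "m * gcd i q = m"
      using j(2) i q by (simp add: gcd_mult_distrib_nat)
    then have "coprime i q"
      using assms(1) by (simp add: coprime_iff_gcd_eq_1)
    moreover have "i < q"
      using j(1) i q assms(1) by simp
    ultimately show "j \<in> (*) m ` {i. i < q \<and> coprime i q}"
      using i by auto
  next
    fix j assume "j \<in> (*) m ` {i. i < q \<and> coprime i q}"
    then obtain i where i: "j = m * i" "i < q" "coprime i q"
      by auto
    have "gcd j N = m * gcd i q"
      unfolding i(1) q by (rule gcd_mult_distrib_nat[symmetric])
    then show "j \<in> {j. j < N \<and> gcd j N = m}"
      using i q assms(1) by simp
  qed
qed

lemma sum_unit_root_gcd_eq: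
  fixes a d :: nat
  assumes a: "0 < a"
  shows "(\<Sum>j | j < d \<and> gcd j d = a. unit_root d ^ j) = (if a dvd d then ramanujan_sum (d div a) else 0)"
proof (cases "a dvd d")
  case True
  have "inj_on ((*) a) {i. i < d div a \<and> coprime i (d div a)}"
    using a by (simp add: inj_on_def)
  then show ?thesis
    using True unfolding gcd_eq_set_eq_image[OF a True] ramanujan_sum_def
    by (simp add: sum.reindex unit_root_power_mult[OF True a])
next
  case False
  then have "{j. j < d \<and> gcd j d = a} = {}"
    by (metis (mono_tags, lifting) empty_Collect_eq gcd_dvd2)
  then show ?thesis
    using False by (simp only: sum.empty if_False)
qed

lemma card_gcd_eq_totient_lessThan:
  fixes a N :: nat
  assumes "0 < N" "a dvd N"
  shows "card {j. j < N \<and> gcd j N = a} = totient (N div a)"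
proof -
  have "bij_betw (\<lambda>j. if j = 0 then N else j) {j. j < N \<and> gcd j N = a} {k\<in>{0<..N}. gcd k N = a}"
    by (rule bij_betw_byWitness[where f'="\<lambda>k. k mod N"]) (use assms in \<open>auto simp: le_less\<close>)
  then show ?thesis
    using card_gcd_eq_totient[OF assms] by (simp add: bij_betw_same_card)
qed

lemma sum_gcd_mult_unit_root_eq_ramanujan_sums:
  fixes e :: nat
  assumes e: "0 < e"
  shows "(\<Sum>j<e. of_nat (gcd j e) * unit_root e ^ j)
       = (\<Sum>m | m dvd e. of_nat m * ramanujan_sum (e div m))"
proof -
  have "(\<Sum>j<e. of_nat (gcd j e) * unit_root e ^ j)
      = (\<Sum>m | m dvd e. \<Sum>j | j \<in> {..<e} \<and> gcd j e = m. of_nat (gcd j e) * unit_root e ^ j)"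
    by (rule sum.group[symmetric]) (use e in auto)
  also have "\<dots> = (\<Sum>m | m dvd e. of_nat m * ramanujan_sum (e div m))"
  proof (intro sum.cong refl)
    fix m assume "m \<in> {m. m dvd e}"
    then have m: "m dvd e" "0 < m"
      using e by (auto intro: Nat.gr0I)
    have "(\<Sum>j | j \<in> {..<e} \<and> gcd j e = m. of_nat (gcd j e) * unit_root e ^ j)
        = of_nat m * (\<Sum>j | j < e \<and> gcd j e = m. unit_root e ^ j)"
      by (simp add: sum_distrib_left)
    then show "(\<Sum>j | j \<in> {..<e} \<and> gcd j e = m. of_nat (gcd j e) * unit_root e ^ j)
        = of_nat m * ramanujan_sum (e div m)"
      using sum_unit_root_gcd_eq[OF m(2), of e] m(1) by simp
  qed
  finally show ?thesis .
qed

lemma sum_unit_root_powers_dvd: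
  assumes e: "0 < e" and d: "d dvd e"
  shows "(\<Sum>j<e. if d dvd j then unit_root e ^ j else 0) = (if d = e then 1 else 0)"
proof -
  have d0: "0 < d" "0 < e div d"
    using d e by (auto intro: Nat.gr0I)
  have "{j. j < e \<and> d dvd j} = (*) d ` {..<e div d}"
    using d d0 by (auto elim!: dvdE simp: mult_less_cancel1)
  moreover have "inj_on ((*) d) {..<e div d}"
    using d0 by (simp add: inj_on_def)
  ultimately have "(\<Sum>j<e. if d dvd j then unit_root e ^ j else 0) = (\<Sum>i<e div d. unit_root e ^ (d * i))"
    by (simp add: sum.If_cases lessThan_def Int_def conj_commute sum.reindex)
  also have "\<dots> = (\<Sum>i<e div d. unit_root (e div d) ^ i)"
    by (simp add: unit_root_power_mult d d0)
  also have "\<dots> = (if d = e then 1 else 0)"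
    using d d0 sum_unit_root_powers[OF d0(2)] by (metis div_self dvd_mult_div_cancel mult.right_neutral
      less_irrefl)
  finally show ?thesis .
qed

lemma sum_gcd_mult_unit_root_eq_totient:
  fixes e :: nat
  assumes e: "0 < e"
  shows "(\<Sum>j<e. of_nat (gcd j e) * unit_root e ^ j) = of_nat (totient e)"
proof -
  define D where "D = {d. d dvd e}"
  have D: "finite D"
    using e by (simp add: D_def)
  have gcd_eq: "of_nat (gcd j e) = (\<Sum>d\<in>D. if d dvd j then of_nat (totient d) else (0::complex))" for j
  proof -
    have "gcd j e = (\<Sum>d | d dvd gcd j e. totient d)"
      by (rule totient_divisor_sum[symmetric])
    also have "{d. d dvd gcd j e} = {d\<in>D. d dvd j}"
      by (auto simp: D_def)
    finally have "of_nat (gcd j e) = (\<Sum>d\<in>{d\<in>D. d dvd j}. of_nat (totient d) :: complex)"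
      by simp
    then show ?thesis
      using D by (simp add: sum.inter_filter)
  qed
  have "(\<Sum>j<e. of_nat (gcd j e) * unit_root e ^ j)
      = (\<Sum>j<e. \<Sum>d\<in>D. if d dvd j then of_nat (totient d) * unit_root e ^ j else 0)"
    unfolding gcd_eq sum_distrib_right by (intro sum.cong refl) simp
  also have "\<dots> = (\<Sum>d\<in>D. \<Sum>j<e. if d dvd j then of_nat (totient d) * unit_root e ^ j else 0)"
    by (rule sum.swap)
  also have "\<dots> = (\<Sum>d\<in>D. of_nat (totient d) * (\<Sum>j<e. if d dvd j then unit_root e ^ j else 0))"
    by (simp add: sum_distrib_left if_distrib cong: if_cong)
  also have "\<dots> = (\<Sum>d\<in>D. if d = e then of_nat (totient d) else 0)"
    using sum_unit_root_powers_dvd[OF e] by (intro sum.cong refl) (simp add: D_def)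
  also have "\<dots> = of_nat (totient e)"
    using D by (simp add: D_def sum.delta)
  finally show ?thesis .
qed

text \<open>Both sides equal \<open>\<Sum>(j < e) gcd(j, e) \<omega>\<^sub>e\<^sup>j\<close>: group the terms by \<open>gcd(j, e)\<close>, or
  expand \<open>gcd(j, e) = \<Sum>(d | gcd(j, e)) \<phi>(d)\<close> and sum the roots of unity.\<close>

lemma sum_dvd_mult_ramanujan_sum:
  "0 < e \<Longrightarrow> (\<Sum>m | m dvd e. of_nat m * ramanujan_sum (e div m)) = of_nat (totient e)"
  using sum_gcd_mult_unit_root_eq_ramanujan_sums sum_gcd_mult_unit_root_eq_totient by simp

lemma sum_dvd_mult_sum_unit_root_gcd_eq:
  fixes N a :: nat
  assumes N: "0 < N" and a: "0 < a" "a dvd N"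
  shows "(\<Sum>m | m dvd N. of_nat m * (\<Sum>j | j < N div m \<and> gcd j (N div m) = a. unit_root (N div m) ^ j))
       = of_nat (totient (N div a))"
proof -
  define e where "e = N div a"
  have Nae: "N = a * e"
    using a(2) by (simp add: e_def)
  have e: "0 < e"
    using N Nae by (cases "e = 0") auto
  have inner: "(\<Sum>j | j < N div m \<and> gcd j (N div m) = a. unit_root (N div m) ^ j)
      = (if m dvd e then ramanujan_sum (e div m) else 0)" if m: "m dvd N" for m
  proof -
    have "0 < m"
      using m N by (auto intro: Nat.gr0I)
    then have "a dvd N div m \<longleftrightarrow> a * m dvd a * e"
      using m Nae by (simp add: dvd_div_iff_mult)
    also have "\<dots> \<longleftrightarrow> m dvd e"
      using a(1) by simp
    finally show ?thesis
      using sum_unit_root_gcd_eq[OF a(1), of "N div m"]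
      by (simp add: e_def div_mult2_eq[symmetric] mult.commute)
  qed
  have "(\<Sum>m | m dvd N. of_nat m * (\<Sum>j | j < N div m \<and> gcd j (N div m) = a. unit_root (N div m) ^ j))
      = (\<Sum>m | m dvd N. if m dvd e then of_nat m * ramanujan_sum (e div m) else 0)"
    using inner by (intro sum.cong refl) simp
  also have "\<dots> = (\<Sum>m | m dvd N \<and> m dvd e. of_nat m * ramanujan_sum (e div m))"
    using N by (simp add: sum.inter_filter[symmetric])
  also have "{m. m dvd N \<and> m dvd e} = {m. m dvd e}"
    using Nae by auto
  finally show ?thesis
    using sum_dvd_mult_ramanujan_sum[OF e] by (simp add: e_def)
qed

lemma lin_char_funpow_cyc: "j < n \<Longrightarrow> lin_char n (cyc n ^^ j) = unit_root n ^ j"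
proof -
  assume j: "j < n"
  have "(THE j'. j' < n \<and> cyc n ^^ j = cyc n ^^ j') = j"
    using inj_on_funpow_cyc[of n] j by (auto simp: inj_on_def)
  then show ?thesis
    by (simp add: lin_char_def unit_root_def)
qed

lemma frob_lie_char:
  "frob n (lie_char n) lam
     = (\<Sum>j<n. if replicate_mset (gcd j n) (n div gcd j n) = lam then unit_root n ^ j else 0) / n"
  unfolding lie_char_def frob_ind_char_cyc_grp
  by (intro arg_cong2[where f="(/)"] sum.cong refl) (simp add: lin_char_funpow_cyc)

lemma frob_lie_char_eq_0:
  assumes "sum_mset lam \<noteq> n"
  shows "frob n (lie_char n) lam = 0"
proof -
  have "sum_mset (replicate_mset (gcd j n) (n div gcd j n)) = n" if "j < n" for j
    by (simp add: sum_mset_replicate_mset)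
  then show ?thesis
    unfolding frob_lie_char using assms by (intro divide_eq_0_iff[THEN iffD2] disjI1 sum.neutral) auto
qed

lemma Lie_eq: "Lie mu = (if 0 < sum_mset mu then frob (sum_mset mu) (lie_char (sum_mset mu)) mu else 0)"
proof -
  have fin: "finite {k. Suc k = sum_mset mu}"
    by (rule finite_subset[of _ "{sum_mset mu - 1}"]) auto
  have "Lie mu = (\<Sum>k | Suc k = sum_mset mu. frob (Suc k) (lie_char (Suc k)) mu)"
    unfolding Lie_def by (rule suminf_finite[OF fin]) (auto intro: frob_lie_char_eq_0)
  also have "\<dots> = (if 0 < sum_mset mu then frob (sum_mset mu) (lie_char (sum_mset mu)) mu else 0)"
  proof (cases "sum_mset mu")
    case 0
    have "{k. Suc k = sum_mset mu} = {}"
      unfolding 0 by simp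
    then show ?thesis
      unfolding 0 by (simp only: sum.empty) simp
  next
    case (Suc k)
    then have "{k'. Suc k' = sum_mset mu} = {k}"
      by auto
    then show ?thesis
      using Suc by simp
  qed
  finally show ?thesis .
qed

lemma Lie_eq_0:
  assumes "sum_mset mu = 0"
  shows "Lie mu = 0"
proof -
  have "\<not> 0 < sum_mset mu"
    using assms by linarith
  then show ?thesis
    by (subst Lie_eq) (simp only: if_False)
qed

lemma image_mset_mult_div:
  fixes m :: nat
  assumes "\<forall>x\<in>#nu. m dvd x"
  shows "image_mset ((*) m) (image_mset (\<lambda>x. x div m) nu) = nu"
  unfolding multiset.map_comp o_def using assms by (simp add: image_mset_cong)

lemma image_mset_mult_eq_iff:
  fixes m :: nat
  assumes "0 < m"
  shows "image_mset ((*) m) A = image_mset ((*) m) B \<longleftrightarrow> A = B"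
proof
  assume "image_mset ((*) m) A = image_mset ((*) m) B"
  then have "image_mset (\<lambda>x. x div m) (image_mset ((*) m) A) = image_mset (\<lambda>x. x div m) (image_mset ((*) m) B)"
    by simp
  then show "A = B"
    using assms by (simp add: multiset.map_comp o_def)
qed simp

lemma sum_mset_image_mult: "sum_mset (image_mset ((*) (m::nat)) A) = m * sum_mset A"
  by (induct A) (auto simp: algebra_simps)

lemma pleth_p_Lie_dvd:
  fixes m N :: nat
  assumes N: "1 \<le> N" and nu: "sum_mset nu = N" and m: "m dvd N"
  defines "d \<equiv> N div m"
  shows "pleth_p m Lie nu
       = (\<Sum>j<d. if replicate_mset (gcd j d) (N div gcd j d) = nu then unit_root d ^ j else 0) / d"
proof -
  have Nmd: "N = m * d" and m0: "0 < m" and d0: "1 \<le> d"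
    using m N by (auto simp: d_def intro: Nat.gr0I)
  have N_div_gcd: "N div gcd j d = m * (d div gcd j d)" for j
    using Nmd by (metis gcd_dvd2 div_mult_swap)
  show ?thesis
  proof (cases "\<forall>x\<in>#nu. m dvd x")
    case True
    define mu where "mu = image_mset (\<lambda>x. x div m) nu"
    have nu_mu: "nu = image_mset ((*) m) mu"
      unfolding mu_def by (rule image_mset_mult_div[OF True, symmetric])
    then have "sum_mset mu = d"
      using nu Nmd m0 by (simp add: sum_mset_image_mult)
    then have "pleth_p m Lie nu = frob d (lie_char d) mu"
      using True m0 d0 by (simp add: pleth_p_def mu_def Lie_eq)
    also have "\<dots> = (\<Sum>j<d. if replicate_mset (gcd j d) (N div gcd j d) = nu
        then unit_root d ^ j else 0) / d"
      unfolding frob_lie_char nu_mu N_div_gcd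
      using image_mset_mult_eq_iff[OF m0, of "replicate_mset _ _" mu] by simp
    finally show ?thesis .
  next
    case False
    then have "replicate_mset (gcd j d) (N div gcd j d) \<noteq> nu" for j
      unfolding N_div_gcd by (auto split: if_splits)
    then show ?thesis
      using False by (auto simp: pleth_p_def)
  qed
qed

lemma pleth_p_Lie_not_dvd:
  assumes "0 < m" "\<not> m dvd sum_mset nu"
  shows "pleth_p m Lie nu = 0"
proof (cases "\<forall>x\<in>#nu. m dvd x")
  case True
  then have "sum_mset nu = m * sum_mset (image_mset (\<lambda>x. x div m) nu)"
    by (metis image_mset_mult_div sum_mset_image_mult)
  then show ?thesis
    using assms(2) by simp
qed (auto simp: pleth_p_def)

lemma replicate_mset_div_eq_iff:
  assumes "a * (N div a) = N" "1 \<le> N"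
  shows "replicate_mset g (N div g) = replicate_mset a (N div a) \<longleftrightarrow> g = a"
  using assms by (metis mult_is_0 not_one_le_zero size_replicate_mset)

lemma pleth_p_Lie_replicate_mset:
  assumes N: "1 \<le> N" and m: "m dvd N" and a: "a * (N div a) = N"
  shows "pleth_p m Lie (replicate_mset a (N div a))
       = of_nat m * (\<Sum>j | j < N div m \<and> gcd j (N div m) = a. unit_root (N div m) ^ j) / of_nat N"
proof -
  have "sum_mset (replicate_mset a (N div a)) = N"
    using a by (simp add: sum_mset_replicate_mset)
  then have "pleth_p m Lie (replicate_mset a (N div a))
      = (\<Sum>j | j < N div m \<and> gcd j (N div m) = a. unit_root (N div m) ^ j) / of_nat (N div m)"
    using pleth_p_Lie_dvd[OF N _ m] replicate_mset_div_eq_iff[OF a N]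
    by (simp add: sum.If_cases lessThan_def Int_def conj_commute)
  moreover have "of_nat N = (of_nat m * of_nat (N div m) :: complex)"
    using m by (metis dvd_mult_div_cancel of_nat_mult)
  moreover have "m \<noteq> 0"
    using m N by auto
  ultimately show ?thesis
    by simp
qed

lemma sum_pleth_p_Lie_eq_sum_dvd:
  assumes N: "1 \<le> N" and nu: "sum_mset nu = N"
  shows "(\<Sum>m\<in>{1..N}. pleth_p m Lie nu) = (\<Sum>m | m dvd N. pleth_p m Lie nu)"
  by (rule sum.mono_neutral_right)
    (use N nu pleth_p_Lie_not_dvd[of _ nu] in \<open>auto simp: dvd_imp_le intro: Nat.gr0I\<close>)

text \<open>Both sides vanish unless \<open>\<nu> = ((N/a)\<^sup>a)\<close> for some \<open>a\<close>. Then the left side is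
  \<open>\<Sum>(m | N) (m/N) \<Sum>(j < N/m, gcd(j, N/m) = a) \<omega>\<^sub>N\<^sub>/\<^sub>m\<^sup>j = \<phi>(N/a)/N\<close>, and \<open>\<phi>(N/a)\<close> also counts
  the powers \<open>c\<^sup>j\<close> of the long cycle with \<open>a\<close> cycles.\<close>

lemma sum_pleth_p_Lie_eq_frob_conj_char:
  assumes N: "1 \<le> N" and nu: "sum_mset nu = N"
  shows "(\<Sum>m\<in>{1..N}. pleth_p m Lie nu) = frob N (conj_char N) nu"
proof (cases "\<exists>a. nu = replicate_mset a (N div a)")
  case True
  then obtain a where a: "nu = replicate_mset a (N div a)"
    by blast
  then have aN: "a * (N div a) = N"
    using nu by (simp add: sum_mset_replicate_mset)
  then have "0 < a" "a dvd N"
    using N by (auto intro: Nat.gr0I dvd_triv_left[of a "N div a", unfolded aN])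
  then have "(\<Sum>m | m dvd N. pleth_p m Lie nu) = of_nat (totient (N div a)) / of_nat N"
    using sum_dvd_mult_sum_unit_root_gcd_eq[of N a] N
    by (simp add: a pleth_p_Lie_replicate_mset[OF N _ aN] sum_divide_distrib[symmetric])
  also have "\<dots> = frob N (conj_char N) nu"
    using frob_conj_char[OF N] card_gcd_eq_totient_lessThan[of N a] \<open>a dvd N\<close> N
    by (simp add: a replicate_mset_div_eq_iff[OF aN N])
  finally show ?thesis
    using sum_pleth_p_Lie_eq_sum_dvd[OF N nu] by simp
next
  case False
  then have "replicate_mset g (N div g) \<noteq> nu" for g
    by auto
  then have "pleth_p m Lie nu = 0" if "m dvd N" for m
    using pleth_p_Lie_dvd[OF N nu that] by simp
  then show ?thesis
    using sum_pleth_p_Lie_eq_sum_dvd[OF N nu] frob_conj_char[OF N] False by auto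
qed

lemma finite_submultisets: "finite {A. A \<subseteq># B}"
proof (rule finite_subset)
  show "{A. A \<subseteq># B} \<subseteq> mset ` {ys. set ys \<subseteq> set_mset B \<and> length ys \<le> size B}"
  proof
    fix A assume "A \<in> {A. A \<subseteq># B}"
    moreover obtain ys where "mset ys = A"
      using ex_mset by blast
    ultimately show "A \<in> mset ` {ys. set ys \<subseteq> set_mset B \<and> length ys \<le> size B}"
      by (metis (mono_tags, lifting) image_eqI mem_Collect_eq mset_subset_eqD set_mset_mset
        size_mset size_mset_mono subsetI)
  qed
  show "finite (mset ` {ys. set ys \<subseteq> set_mset B \<and> length ys \<le> size B})"
    by (intro finite_imageI finite_lists_length_le) simp
qed

lemma sf_mult_commute: "sf_mult f g = sf_mult g f"
proof (rule ext)
  fix nu :: "nat multiset"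
  have diff_diff: "nu - (nu - A) = A" if "A \<subseteq># nu" for A
    using that by (auto simp: multiset_eq_iff subseteq_mset_def)
  have "sf_mult f g nu = (\<Sum>lam\<in>{lam. lam \<subseteq># nu}. f (nu - lam) * g (nu - (nu - lam)))"
    unfolding sf_mult_def
    by (rule sum.reindex_bij_witness[of _ "\<lambda>lam. nu - lam" "\<lambda>lam. nu - lam"]) (auto simp: diff_diff)
  also have "\<dots> = sf_mult g f nu"
    unfolding sf_mult_def by (intro sum.cong refl) (auto simp: diff_diff mult.commute)
  finally show "sf_mult f g nu = sf_mult g f nu" .
qed

lemma sf_mult_assoc: "sf_mult (sf_mult f g) h = sf_mult f (sf_mult g h)"
proof (rule ext)
  fix nu
  have "sf_mult (sf_mult f g) h nu
      = (\<Sum>(A, B)\<in>Sigma {A. A \<subseteq># nu} (\<lambda>A. {B. B \<subseteq># A}). f B * g (A - B) * h (nu - A))"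
    by (simp add: sf_mult_def sum_distrib_right sum.Sigma finite_submultisets)
  also have "\<dots> = (\<Sum>(B, C)\<in>Sigma {B. B \<subseteq># nu} (\<lambda>B. {C. C \<subseteq># nu - B}). f B * g C * h (nu - B - C))"
  proof (rule sum.reindex_bij_witness[of _ "\<lambda>(B, C). (B + C, B)" "\<lambda>(A, B). (B, A - B)"])
    show "\<And>a. a \<in> Sigma {A. A \<subseteq># nu} (\<lambda>A. {B. B \<subseteq># A}) \<Longrightarrow>
          (case case a of (A, B) \<Rightarrow> (B, A - B) of (B, C) \<Rightarrow> (B + C, B)) = a"
      by (auto simp: multiset_eq_iff subseteq_mset_def)
    show "\<And>a. a \<in> Sigma {A. A \<subseteq># nu} (\<lambda>A. {B. B \<subseteq># A}) \<Longrightarrow>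
          (case a of (A, B) \<Rightarrow> (B, A - B)) \<in> Sigma {B. B \<subseteq># nu} (\<lambda>B. {C. C \<subseteq># nu - B})"
      by (auto simp: subseteq_mset_def) (meson le_trans, meson diff_le_mono)
    show "\<And>b. b \<in> Sigma {B. B \<subseteq># nu} (\<lambda>B. {C. C \<subseteq># nu - B}) \<Longrightarrow>
          (case case b of (B, C) \<Rightarrow> (B + C, B) of (A, B) \<Rightarrow> (B, A - B)) = b"
      by auto
    show "\<And>b. b \<in> Sigma {B. B \<subseteq># nu} (\<lambda>B. {C. C \<subseteq># nu - B}) \<Longrightarrow>
          (case b of (B, C) \<Rightarrow> (B + C, B)) \<in> Sigma {A. A \<subseteq># nu} (\<lambda>A. {B. B \<subseteq># A})"
      by (auto simp: subseteq_mset_def) (metis add.commute le_diff_conv2)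
    show "\<And>a. a \<in> Sigma {A. A \<subseteq># nu} (\<lambda>A. {B. B \<subseteq># A}) \<Longrightarrow>
          (case case a of (A, B) \<Rightarrow> (B, A - B) of (B, C) \<Rightarrow> f B * g C * h (nu - B - C)) =
          (case a of (A, B) \<Rightarrow> f B * g (A - B) * h (nu - A))"
      by (auto simp: subseteq_mset_def)
  qed
  also have "\<dots> = sf_mult f (sf_mult g h) nu"
    by (simp add: sf_mult_def sum_distrib_left mult.assoc sum.Sigma finite_submultisets)
  finally show "sf_mult (sf_mult f g) h nu = sf_mult f (sf_mult g h) nu" .
qed

lemma sf_mult_left_commute: "sf_mult f (sf_mult g h) = sf_mult g (sf_mult f h)"
  by (metis sf_mult_assoc sf_mult_commute)

lemma sf_mult_one_left: "sf_mult sf_one f = f"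
proof (rule ext)
  fix nu
  have "sf_mult sf_one f nu = (\<Sum>lam\<in>{lam. lam \<subseteq># nu}. if lam = {#} then f (nu - lam) else 0)"
    unfolding sf_mult_def sf_one_def pw_def by (intro sum.cong) auto
  also have "\<dots> = f nu"
    using finite_submultisets[of nu] by (simp add: sum.delta')
  finally show "sf_mult sf_one f nu = f nu" .
qed

lemma sf_mult_one_right: "sf_mult f sf_one = f"
  using sf_mult_one_left sf_mult_commute by metis

lemma sf_mult_sum_right:
  "finite I \<Longrightarrow> sf_mult f (\<lambda>mu. \<Sum>i\<in>I. g i mu) nu = (\<Sum>i\<in>I. sf_mult f (g i) nu)"
  unfolding sf_mult_def by (simp add: sum_distrib_left sum.swap[of _ I])

lemma sf_mult_sub_right: "sf_mult f (sf_sub g h) = sf_sub (sf_mult f g) (sf_mult f h)"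
  unfolding sf_mult_def sf_sub_def by (auto simp: sum_subtractf right_diff_distrib)

lemma sf_mult_sub_left: "sf_mult (sf_sub g h) f = sf_sub (sf_mult g f) (sf_mult h f)"
  using sf_mult_sub_right sf_mult_commute by metis

primrec sf_power :: "sf \<Rightarrow> nat \<Rightarrow> sf" where
  "sf_power f 0 = sf_one"
| "sf_power f (Suc r) = sf_mult f (sf_power f r)"

definition vanishes_below :: "nat \<Rightarrow> sf \<Rightarrow> bool" where
  "vanishes_below d f \<longleftrightarrow> (\<forall>mu. sum_mset mu < d \<longrightarrow> f mu = 0)"

lemma vanishes_below_0: "vanishes_below 0 f"
  by (simp add: vanishes_below_def)

lemma vanishes_below_mult:
  assumes f: "vanishes_below a f" and g: "vanishes_below b g"
  shows "vanishes_below (a + b) (sf_mult f g)"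
  unfolding vanishes_below_def sf_mult_def
proof (intro allI impI sum.neutral ballI)
  fix mu lam assume mu: "sum_mset mu < a + b" and lam: "lam \<in> {lam. lam \<subseteq># mu}"
  have "sum_mset mu = sum_mset lam + sum_mset (mu - lam)"
    using lam by (metis mem_Collect_eq subset_mset.add_diff_inverse sum_mset.union)
  then have "sum_mset lam < a \<or> sum_mset (mu - lam) < b"
    using mu by linarith
  then show "f lam * g (mu - lam) = 0"
    using f g by (auto simp: vanishes_below_def)
qed

section \<open>The plethysm \<open>Hk\<^sub>k[Lie]\<close>\<close>

lemma pleth_p_Suc_0: "pleth_p (Suc 0) g = g"
  by (simp add: pleth_p_def fun_eq_iff)

lemma vanishes_below_Lie: "vanishes_below 1 Lie"
  unfolding vanishes_below_def by (auto intro: Lie_eq_0)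

lemma vanishes_below_pleth_p_Lie:
  assumes "1 \<le> i"
  shows "vanishes_below i (pleth_p i Lie)"
  unfolding vanishes_below_def
proof (intro allI impI)
  fix mu assume mu: "sum_mset mu < i"
  show "pleth_p i Lie mu = 0"
  proof (cases "\<forall>x\<in>#mu. i dvd x")
    case True
    then have "sum_mset mu = i * sum_mset (image_mset (\<lambda>x. x div i) mu)"
      by (metis image_mset_mult_div sum_mset_image_mult)
    then have "sum_mset (image_mset (\<lambda>x. x div i) mu) = 0"
      using mu by (cases "sum_mset (image_mset (\<lambda>x. x div i) mu)") auto
    then show ?thesis
      using True assms Lie_eq_0 by (simp add: pleth_p_def)
  qed (auto simp: pleth_p_def)
qed

lemma vanishes_below_sf_power_Lie: "vanishes_below r (sf_power Lie r)"
  by (induct r) (simp_all add: vanishes_below_0 vanishes_below_mult[OF vanishes_below_Lie, simplified])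

definition pleth_prod :: "nat multiset \<Rightarrow> sf" where
  "pleth_prod M = fold_mset (\<lambda>i acc. sf_mult (pleth_p i Lie) acc) sf_one M"

interpretation pleth_prod: comp_fun_commute "\<lambda>i acc. sf_mult (pleth_p i Lie) acc"
  by unfold_locales (auto simp: fun_eq_iff sf_mult_left_commute)

lemma pleth_prod_empty: "pleth_prod {#} = sf_one"
  by (simp add: pleth_prod_def)

lemma pleth_prod_add_mset: "pleth_prod (add_mset x M) = sf_mult (pleth_p x Lie) (pleth_prod M)"
  unfolding pleth_prod_def by (rule pleth_prod.fold_mset_add_mset)

lemma sf_prod_list_map_pleth_p: "sf_prod_list (map (\<lambda>i. pleth_p i Lie) xs) = pleth_prod (mset xs)"
  by (induct xs) (simp_all add: sf_prod_list_def pleth_prod_empty pleth_prod_add_mset)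

lemma pleth_prod_replicate_1: "pleth_prod (replicate_mset r 1) = sf_power Lie r"
  by (induct r) (simp_all add: pleth_prod_empty pleth_prod_add_mset pleth_p_Suc_0)

lemma vanishes_below_pleth_prod: "0 \<notin># M \<Longrightarrow> vanishes_below (sum_mset M) (pleth_prod M)"
proof (induct M)
  case (add x M)
  then have "1 \<le> x"
    by (cases x) auto
  then show ?case
    using vanishes_below_mult[OF vanishes_below_pleth_p_Lie add.hyps] add.prems
    by (simp add: pleth_prod_add_mset)
qed (simp add: vanishes_below_0)

lemma size_le_sum_mset: "0 \<notin># M \<Longrightarrow> size M \<le> sum_mset M"
  by (induct M) (auto simp: Suc_le_eq)

lemma finite_partitions_le: "finite {lam. is_partition lam \<and> sum_mset lam \<le> s}"
proof (rule finite_subset)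
  show "{lam. is_partition lam \<and> sum_mset lam \<le> s} \<subseteq> mset ` {ys. set ys \<subseteq> {1..s} \<and> length ys \<le> s}"
  proof
    fix lam assume "lam \<in> {lam. is_partition lam \<and> sum_mset lam \<le> s}"
    then have lam: "0 \<notin># lam" "sum_mset lam \<le> s"
      by (auto simp: is_partition_def)
    obtain ys where ys: "mset ys = lam"
      using ex_mset by blast
    have "x \<in> {1..s}" if "x \<in> set ys" for x
    proof -
      have "x \<in># lam"
        using that ys by auto
      then have "x \<noteq> 0"
        using lam(1) by metis
      moreover have "x \<le> sum_mset lam"
        using \<open>x \<in># lam\<close> by (simp add: sum_mset.remove)
      ultimately show ?thesis
        using lam(2) by auto
    qed
    moreover have "length ys \<le> s"
      using size_le_sum_mset[OF lam(1)] lam(2) ys by auto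
    ultimately show "lam \<in> mset ` {ys. set ys \<subseteq> {1..s} \<and> length ys \<le> s}"
      using ys by blast
  qed
  show "finite (mset ` {ys. set ys \<subseteq> {1..s} \<and> length ys \<le> s})"
    by (intro finite_imageI finite_lists_length_le) simp
qed

text \<open>\<open>hook_Lie m r\<close> is the plethysm \<open>p\<^sub>(\<^sub>m\<^sub>,\<^sub>1\<^sup>r\<^sub>)[Lie] = p\<^sub>m[Lie] Lie\<^sup>r\<close> of a hook-shaped power sum.\<close>

definition hook_Lie :: "nat \<Rightarrow> nat \<Rightarrow> sf" where
  "hook_Lie m r = sf_mult (pleth_p m Lie) (sf_power Lie r)"

lemma hook_Lie_eq_0: "1 \<le> m \<Longrightarrow> sum_mset mu < m + r \<Longrightarrow> hook_Lie m r mu = 0"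
  using vanishes_below_mult[OF vanishes_below_pleth_p_Lie vanishes_below_sf_power_Lie]
  unfolding hook_Lie_def vanishes_below_def by blast

lemma plethysm_Hk_Lie:
  assumes "1 \<le> k"
  shows "plethysm (Hk k) Lie mu = (\<Sum>r<k. hook_Lie (k - r) r mu)"
proof -
  define Lam where "Lam = {lam. is_partition lam \<and> sum_mset lam \<le> sum_mset mu}"
  define h where "h r = add_mset (k - r) (replicate_mset r 1)" for r
  have "plethysm (Hk k) Lie mu = (\<Sum>lam\<in>Lam. \<Sum>r<k. if lam = h r then pleth_prod lam mu else 0)"
    unfolding plethysm_def Hk_def sum_distrib_right Lam_def sf_prod_list_map_pleth_p
    by (intro sum.cong refl) (auto simp: pw_def h_def)
  also have "\<dots> = (\<Sum>r<k. if h r \<in> Lam then pleth_prod (h r) mu else 0)"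
    using finite_partitions_le by (subst sum.swap) (simp add: sum.delta' Lam_def)
  also have "\<dots> = (\<Sum>r<k. pleth_prod (h r) mu)"
  proof (intro sum.cong refl)
    fix r assume "r \<in> {..<k}"
    then have "0 \<notin># h r" "sum_mset (h r) = k"
      by (auto simp: h_def)
    then have "h r \<notin> Lam \<Longrightarrow> pleth_prod (h r) mu = 0"
      using vanishes_below_pleth_prod[of "h r"] by (auto simp: Lam_def is_partition_def vanishes_below_def)
    then show "(if h r \<in> Lam then pleth_prod (h r) mu else 0) = pleth_prod (h r) mu"
      by simp
  qed
  finally show ?thesis
    using pleth_prod_replicate_1 by (simp add: h_def pleth_prod_add_mset hook_Lie_def)
qed

lemma sum_plethysm_Hk_Lie:
  assumes "sum_mset mu \<le> N"
  shows "(\<Sum>k. plethysm (Hk (Suc k)) Lie mu) = (\<Sum>m\<in>{1..N}. \<Sum>r\<le>N. hook_Lie m r mu)"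
proof -
  define s where "s = sum_mset mu"
  have "(\<Sum>k. plethysm (Hk (Suc k)) Lie mu) = (\<Sum>k<s. plethysm (Hk (Suc k)) Lie mu)"
  proof (rule suminf_finite)
    fix k assume "k \<notin> {..<s}"
    have "plethysm (Hk (Suc k)) Lie mu = (\<Sum>r<Suc k. hook_Lie (Suc k - r) r mu)"
      by (rule plethysm_Hk_Lie) simp
    also have "\<dots> = 0"
      using \<open>k \<notin> {..<s}\<close> by (intro sum.neutral ballI hook_Lie_eq_0) (auto simp: s_def)
    finally show "plethysm (Hk (Suc k)) Lie mu = 0" .
  qed simp
  also have "\<dots> = (\<Sum>k<s. \<Sum>r<Suc k. hook_Lie (Suc k - r) r mu)"
    by (intro sum.cong refl plethysm_Hk_Lie) simp
  also have "\<dots> = (\<Sum>(k, r)\<in>Sigma {..<s} (\<lambda>k. {..<Suc k}). hook_Lie (Suc k - r) r mu)"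
    by (rule sum.Sigma) auto
  also have "\<dots> = (\<Sum>(m, r)\<in>{(m, r). 1 \<le> m \<and> m + r \<le> s}. hook_Lie m r mu)"
    by (rule sum.reindex_bij_witness[of _ "\<lambda>(m, r). (m + r - 1, r)" "\<lambda>(k, r). (Suc k - r, r)"]) auto
  also have "\<dots> = (\<Sum>(m, r)\<in>{1..N} \<times> {..N}. hook_Lie m r mu)"
    by (rule sum.mono_neutral_left) (use assms in \<open>auto intro!: hook_Lie_eq_0 simp: s_def\<close>)
  finally show ?thesis
    by (simp add: sum.cartesian_product)
qed

lemma sf_mult_one_minus_Lie_hook_Lie:
  "sf_mult (sf_sub sf_one Lie) (hook_Lie m r) = sf_sub (hook_Lie m r) (hook_Lie m (Suc r))"
proof -
  have "sf_mult (sf_sub sf_one Lie) (hook_Lie m r)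
      = sf_mult (pleth_p m Lie) (sf_mult (sf_sub sf_one Lie) (sf_power Lie r))"
    unfolding hook_Lie_def by (rule sf_mult_left_commute)
  also have "sf_mult (sf_sub sf_one Lie) (sf_power Lie r) = sf_sub (sf_power Lie r) (sf_power Lie (Suc r))"
    by (simp add: sf_mult_sub_left sf_mult_one_left)
  finally show ?thesis
    by (simp add: hook_Lie_def sf_mult_sub_right)
qed

lemma sf_mult_one_minus_Lie_sum_hook_Lie:
  assumes "sum_mset nu \<le> n"
  shows "sf_mult (sf_sub sf_one Lie) (\<lambda>mu. \<Sum>m\<in>{1..n}. \<Sum>r\<le>n. hook_Lie m r mu) nu
       = (\<Sum>m\<in>{1..n}. pleth_p m Lie nu)"
proof -
  have "sf_mult (sf_sub sf_one Lie) (\<lambda>mu. \<Sum>m\<in>{1..n}. \<Sum>r\<le>n. hook_Lie m r mu) nu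
      = (\<Sum>m\<in>{1..n}. \<Sum>r<Suc n. hook_Lie m r nu - hook_Lie m (Suc r) nu)"
    by (simp add: sf_mult_sum_right sf_mult_one_minus_Lie_hook_Lie lessThan_Suc_atMost)
      (simp add: sf_sub_def)
  also have "\<dots> = (\<Sum>m\<in>{1..n}. hook_Lie m 0 nu - hook_Lie m (Suc n) nu)"
    by (intro sum.cong refl) (rule sum_lessThan_telescope')
  also have "\<dots> = (\<Sum>m\<in>{1..n}. pleth_p m Lie nu)"
  proof (intro sum.cong refl)
    fix m assume "m \<in> {1..n}"
    then have "hook_Lie m (Suc n) nu = 0"
      using assms by (intro hook_Lie_eq_0) auto
    then show "hook_Lie m 0 nu - hook_Lie m (Suc n) nu = pleth_p m Lie nu"
      by (simp add: hook_Lie_def sf_mult_one_right)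
  qed
  finally show ?thesis .
qed

lemma frob_conj_char_eq_deg_part:
  assumes n: "1 \<le> n"
  shows "frob n (conj_char n) =
    deg_part n (sf_mult (sf_sub sf_one Lie) (\<lambda>nu. \<Sum>k. plethysm (Hk (Suc k)) Lie nu))"
proof
  fix nu
  show "frob n (conj_char n) nu =
    deg_part n (sf_mult (sf_sub sf_one Lie) (\<lambda>nu. \<Sum>k. plethysm (Hk (Suc k)) Lie nu)) nu"
  proof (cases "sum_mset nu = n")
    case False
    then show ?thesis
      using frob_conj_char[OF n] by (auto simp: deg_part_def sum_mset_replicate_mset)
  next
    case True
    have "sf_mult (sf_sub sf_one Lie) (\<lambda>nu. \<Sum>k. plethysm (Hk (Suc k)) Lie nu) nu
        = sf_mult (sf_sub sf_one Lie) (\<lambda>mu. \<Sum>m\<in>{1..n}. \<Sum>r\<le>n. hook_Lie m r mu) nu"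
      unfolding sf_mult_def
    proof (intro sum.cong refl arg_cong2[where f="(*)"])
      fix lam assume "lam \<in> {lam. lam \<subseteq># nu}"
      then have "sum_mset (nu - lam) \<le> n"
        using True by (metis le_add2 mem_Collect_eq subset_mset.add_diff_inverse sum_mset.union)
      then show "(\<Sum>k. plethysm (Hk (Suc k)) Lie (nu - lam)) = (\<Sum>m\<in>{1..n}. \<Sum>r\<le>n. hook_Lie m r (nu - lam))"
        by (rule sum_plethysm_Hk_Lie)
    qed
    also have "\<dots> = frob n (conj_char n) nu"
      using sf_mult_one_minus_Lie_sum_hook_Lie sum_pleth_p_Lie_eq_frob_conj_char[OF n] True by simp
    finally show ?thesis
      using True by (simp add: deg_part_def)
  qed
qed

theorem proposition2p20:
  fixes W :: "nat \<Rightarrow> (nat \<Rightarrow> nat) \<Rightarrow> complex"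
  assumes W: "\<forall>n\<ge>1. class_fun n (W n) \<and> frob n (W n) = Hk n"
  shows "(\<forall>n\<ge>1. \<forall>\<sigma>\<in>Sym n.
            W (Suc n) \<sigma> = W n \<sigma> + ind_char (Sym n) (Sym (n - 1)) (W n) \<sigma>)
       \<and> (\<forall>n\<ge>1. frob n (conj_char n) =
            deg_part n (sf_mult (sf_sub sf_one Lie) (\<lambda>nu. \<Sum>k. plethysm (Hk (Suc k)) Lie nu)))"
  using Hk_char_Suc_eq W frob_conj_char_eq_deg_part by simp

end
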